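(* Let $A$ be a simple linear arrangement of $n$ hyperplanes in $\mathbb{R}^d$ with corresponding $d$-maximum class $C\subseteq\{0,1\}^n$, and let $h$ be a generic hyperplane. Then the arrangement induced by $A$ on $h$ corresponds to a $(d-1)$-maximum class $C'\subseteq C$. Moreover, if all $d$-intersection points of $A$ lie on one side of $h$, then every $(d-1)$-cube of $C'$ lies in $\partial C$; and $\partial C$ is the disjoint union of (the $(d-1)$-cubes of) two $(d-1)$-maximum sub-classes of $C$.
   Context: A simple linear arrangement is a collection of $n\ge d$ oriented affine hyperplanes in $\mathbb{R}^d$ in general position: any $k<d$ of them meet in a plane of dimension $d-k$, any $d$ meet in a single point (a $d$-intersection point), and any $d+1$ have empty intersection. Each cell (connected component of the complement) gives a concept in $\{0,1\}^n$ whose $i$-th coordinate records the side of the $i$-th hyperplane containing the cell; the class corresponding to the arrangement is the set of these concepts. A generic hyperplane $h$ is one such that $A\cup\{h\}$ is in general position; the arrangement induced on $h\cong\mathbb{R}^{d-1}$ consists of the $n$ hyperplanes $H_i\cap h$, and its class in $\{0,1\}^n$ is defined in the same way. $C\subseteq\{0,1\}^n$ is $k$-maximum if its VC-dimension is $k$ and $|C|=\sum_{i=0}^k\binom{n}{i}$. A $k$-cube in $C$ is a set of $2^k$ points of $C$ agreeing outside some $k$ coordinates and taking all values on them. The boundary $\partial C$ of a $d$-maximum class is the set of $(d-1)$-cubes of $C$ that are faces of exactly one $d$-cube of $C$. *)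

theory Defs
  imports "HOL-Analysis.Analysis"
begin

text \<open>An oriented affine hyperplane in a Euclidean space is given by a pair (a, b)
  with a nonzero normal a; it is the set {x. a \<bullet> x = b}; its positive side is
  {x. a \<bullet> x > b} (coordinate 1) and its negative side {x. a \<bullet> x < b} (coordinate 0).
  Concepts in {0,1}^n are represented as subsets of {..<n} (the coordinates equal to 1).\<close>

type_synonym 'a ohp = "'a \<times> real"

definition hp :: "'a::euclidean_space ohp \<Rightarrow> 'a set" where
  "hp H = {x. fst H \<bullet> x = snd H}"

definition pos_side :: "'a::euclidean_space ohp \<Rightarrow> 'a set" where
  "pos_side H = {x. fst H \<bullet> x > snd H}"

definition neg_side :: "'a::euclidean_space ohp \<Rightarrow> 'a set" where
  "neg_side H = {x. fst H \<bullet> x < snd H}"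

definition simple_arrangement :: "nat \<Rightarrow> (nat \<Rightarrow> 'a::euclidean_space ohp) \<Rightarrow> bool" where
  "simple_arrangement n H \<longleftrightarrow>
     n \<ge> DIM('a) \<and>
     (\<forall>i<n. fst (H i) \<noteq> 0) \<and>
     (\<forall>K. K \<subseteq> {..<n} \<and> card K \<le> DIM('a) \<longrightarrow>
          aff_dim (\<Inter>i\<in>K. hp (H i)) = int DIM('a) - int (card K)) \<and>
     (\<forall>K. K \<subseteq> {..<n} \<and> card K = DIM('a) + 1 \<longrightarrow> (\<Inter>i\<in>K. hp (H i)) = {})"

definition generic_hyperplane :: "nat \<Rightarrow> (nat \<Rightarrow> 'a::euclidean_space ohp) \<Rightarrow> 'a ohp \<Rightarrow> bool" where
  "generic_hyperplane n H h \<longleftrightarrow> fst h \<noteq> 0 \<and>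
     (\<forall>K. K \<subseteq> {..<Suc n} \<and> card K \<le> DIM('a) \<longrightarrow>
          aff_dim (\<Inter>i\<in>K. hp ((H(n := h)) i)) = int DIM('a) - int (card K)) \<and>
     (\<forall>K. K \<subseteq> {..<Suc n} \<and> card K = DIM('a) + 1 \<longrightarrow> (\<Inter>i\<in>K. hp ((H(n := h)) i)) = {})"

definition concept_of :: "nat \<Rightarrow> (nat \<Rightarrow> 'a::euclidean_space ohp) \<Rightarrow> 'a set \<Rightarrow> nat set" where
  "concept_of n H c = {i. i < n \<and> c \<subseteq> pos_side (H i)}"

definition arr_class :: "nat \<Rightarrow> (nat \<Rightarrow> 'a::euclidean_space ohp) \<Rightarrow> nat set set" where
  "arr_class n H = concept_of n H ` components (UNIV - (\<Union>i<n. hp (H i)))"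

text \<open>Class of the arrangement induced on h: cells are the connected components of
  h minus the hyperplanes H i (i.e. of h \<cong> R^(d-1) minus the hyperplanes H i \<inter> h).\<close>
definition induced_class :: "nat \<Rightarrow> (nat \<Rightarrow> 'a::euclidean_space ohp) \<Rightarrow> 'a ohp \<Rightarrow> nat set set" where
  "induced_class n H h = concept_of n H ` components (hp h - (\<Union>i<n. hp (H i)))"

definition shatters :: "nat set set \<Rightarrow> nat set \<Rightarrow> bool" where
  "shatters C S \<longleftrightarrow> (\<lambda>c. c \<inter> S) ` C = Pow S"

definition maximum_class :: "nat \<Rightarrow> nat \<Rightarrow> nat set set \<Rightarrow> bool" where
  "maximum_class n k C \<longleftrightarrow> C \<subseteq> Pow {..<n} \<and>
     (\<exists>S. S \<subseteq> {..<n} \<and> card S = k \<and> shatters C S) \<and>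
     (\<forall>S. S \<subseteq> {..<n} \<and> shatters C S \<longrightarrow> card S \<le> k) \<and>
     card C = (\<Sum>i\<le>k. n choose i)"

definition is_cube :: "nat \<Rightarrow> nat \<Rightarrow> nat set set \<Rightarrow> bool" where
  "is_cube n k Q \<longleftrightarrow> (\<exists>K b. K \<subseteq> {..<n} \<and> card K = k \<and> b \<subseteq> {..<n} \<and>
       Q = {(b - K) \<union> T | T. T \<subseteq> K})"

definition cubes :: "nat \<Rightarrow> nat \<Rightarrow> nat set set \<Rightarrow> nat set set set" where
  "cubes n k C = {Q. is_cube n k Q \<and> Q \<subseteq> C}"

text \<open>Boundary of a d-maximum class: (d-1)-cubes of C that are faces of exactly one d-cube of C
  (a (d-1)-cube contained in a d-cube is one of its faces).\<close>
definition boundary :: "nat \<Rightarrow> nat \<Rightarrow> nat set set \<Rightarrow> nat set set set" where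
  "boundary n d C = {Q \<in> cubes n (d - 1) C. card {P \<in> cubes n d C. Q \<subseteq> P} = 1}"

end

theory Submission
  imports Defs
begin

(*
  A simple arrangement restricted to an affine set S of dimension k on which it is again in
  general position has sum_{i<=k} (n choose i) cells, by the deletion-restriction recurrence;
  restricting its sign vectors to at most k coordinates is onto, so its class is k-maximum.
  This applies to R^d and to a generic hyperplane h.

  A (d-1)-cube of the class lives on a line L, the intersection of d-1 of the hyperplanes:
  it is spanned by one of the segments into which the remaining hyperplanes cut L, and the
  d-cubes containing it correspond to the vertices adjacent to that segment. Hence it lies in
  the boundary iff its segment is unbounded. If all vertices lie on one side of h, the segment
  of L through h is unbounded. Two parallel generic hyperplanes enclosing all vertices meet
  every line exactly in its two unbounded segments, which yields the decomposition of the
  boundary.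
*)

section \<open>Points, hyperplanes and sign vectors\<close>

definition flat :: "(nat \<Rightarrow> 'a::euclidean_space ohp) \<Rightarrow> nat set \<Rightarrow> 'a set" where
  "flat G K = (\<Inter>i\<in>K. hp (G i))"

definition hp_value :: "'a::euclidean_space ohp \<Rightarrow> 'a \<Rightarrow> real" where
  "hp_value h x = fst h \<bullet> x - snd h"

definition realizes :: "(nat \<Rightarrow> 'a::euclidean_space ohp) \<Rightarrow> nat set \<Rightarrow> nat set \<Rightarrow> 'a \<Rightarrow> bool" where
  "realizes G c I x \<longleftrightarrow> (\<forall>i\<in>I. (i \<in> c \<longrightarrow> hp_value (G i) x > 0) \<and> (i \<notin> c \<longrightarrow> hp_value (G i) x < 0))"

definition sign_class :: "'a::euclidean_space set \<Rightarrow> nat set \<Rightarrow> (nat \<Rightarrow> 'a ohp) \<Rightarrow> nat set set" where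
  "sign_class S I G = {c. c \<subseteq> I \<and> (\<exists>x\<in>S. realizes G c I x)}"

definition general_position :: "'a::euclidean_space set \<Rightarrow> nat set \<Rightarrow> (nat \<Rightarrow> 'a ohp) \<Rightarrow> nat \<Rightarrow> bool" where
  "general_position S I G k \<longleftrightarrow>
     (\<forall>J. J \<subseteq> I \<and> card J \<le> k \<longrightarrow> aff_dim (S \<inter> flat G J) = int k - int (card J)) \<and>
     (\<forall>J. J \<subseteq> I \<and> card J = Suc k \<longrightarrow> S \<inter> flat G J = {})"

lemma mem_hp: "x \<in> hp h \<longleftrightarrow> hp_value h x = 0"
  by (simp add: hp_def hp_value_def)

lemma mem_pos_side: "x \<in> pos_side h \<longleftrightarrow> hp_value h x > 0"
  by (simp add: pos_side_def hp_value_def)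

lemma mem_neg_side: "x \<in> neg_side h \<longleftrightarrow> hp_value h x < 0"
  by (simp add: neg_side_def hp_value_def)

lemma affine_hp: "affine (hp h)"
  unfolding hp_def by (rule affine_hyperplane)

lemma affine_flat: "affine (flat G K)"
  unfolding flat_def by (intro affine_Inter) (auto intro: affine_hp)

lemma mem_flat: "x \<in> flat G K \<longleftrightarrow> (\<forall>i\<in>K. hp_value (G i) x = 0)"
  by (auto simp: flat_def mem_hp)

lemma flat_empty [simp]: "flat G {} = UNIV"
  by (simp add: flat_def)

lemma flat_insert: "flat G (insert j K) = hp (G j) \<inter> flat G K"
  by (auto simp: flat_def)

lemma flat_cong: "(\<And>i. i \<in> K \<Longrightarrow> G i = G' i) \<Longrightarrow> flat G K = flat G' K"
  by (simp add: flat_def)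

lemma realizes_insert_pos:
  "j \<notin> I \<Longrightarrow> realizes G (insert j c) (insert j I) x \<longleftrightarrow> realizes G c I x \<and> hp_value (G j) x > 0"
  by (auto simp: realizes_def)

lemma realizes_insert_neg:
  "j \<notin> c \<Longrightarrow> realizes G c (insert j I) x \<longleftrightarrow> realizes G c I x \<and> hp_value (G j) x < 0"
  by (auto simp: realizes_def)

lemma realizes_subset: "I' \<subseteq> I \<Longrightarrow> realizes G c I x \<Longrightarrow> realizes G c I' x"
  unfolding realizes_def by blast

lemma realizes_cong: "c \<inter> I = c' \<inter> I \<Longrightarrow> realizes G c I x \<longleftrightarrow> realizes G c' I x"
  unfolding realizes_def by blast

lemma realizes_Un:
  assumes "I1 \<inter> I2 = {}"
  shows "realizes G ((c1 \<inter> I1) \<union> (c2 \<inter> I2)) (I1 \<union> I2) x \<longleftrightarrow> realizes G c1 I1 x \<and> realizes G c2 I2 x"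
  using assms unfolding realizes_def by blast

lemma realizes_imp_not_on_hp: "realizes G c I x \<Longrightarrow> i \<in> I \<Longrightarrow> hp_value (G i) x \<noteq> 0"
  by (force simp: realizes_def)

lemma realizes_same_sign:
  "realizes G c I x \<Longrightarrow> realizes G c I y \<Longrightarrow> i \<in> I \<Longrightarrow> hp_value (G i) x * hp_value (G i) y > 0"
  unfolding realizes_def by (cases "i \<in> c") (auto intro: mult_pos_pos mult_neg_neg)

lemma realizes_if_same_sign:
  assumes "realizes G c I x" and "\<forall>i\<in>I. hp_value (G i) y * hp_value (G i) x > 0"
  shows "realizes G c I y"
  unfolding realizes_def
proof
  fix i assume i: "i \<in> I"
  have "hp_value (G i) y * hp_value (G i) x > 0" using assms(2) i by blast
  then show "(i \<in> c \<longrightarrow> hp_value (G i) y > 0) \<and> (i \<notin> c \<longrightarrow> hp_value (G i) y < 0)"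
    using assms(1) i unfolding realizes_def by (auto simp: zero_less_mult_iff)
qed

lemma hp_value_affine_comb: "hp_value h (x + t *\<^sub>R (z - x)) = hp_value h x + t * (fst h \<bullet> (z - x))"
  by (simp add: hp_value_def inner_add_right algebra_simps)

lemma signs_persist_near:
  assumes "finite I" and "\<forall>i\<in>I. hp_value (G i) x \<noteq> 0"
  shows "\<exists>t>0. \<forall>i\<in>I. hp_value (G i) (x + t *\<^sub>R (z - x)) * hp_value (G i) x > 0"
proof -
  have "\<forall>\<^sub>F t in at_right 0. hp_value (G i) (x + t *\<^sub>R (z - x)) * hp_value (G i) x > 0"
    if i: "i \<in> I" for i
  proof -
    have "((\<lambda>t. hp_value (G i) (x + t *\<^sub>R (z - x)) * hp_value (G i) x) \<longlongrightarrow>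
           (hp_value (G i) x + 0 * (fst (G i) \<bullet> (z - x))) * hp_value (G i) x) (at_right 0)"
      unfolding hp_value_affine_comb by (intro tendsto_intros)
    moreover have "hp_value (G i) x \<noteq> 0" using assms(2) i by blast
    then have "hp_value (G i) x * hp_value (G i) x > 0"
      by (simp add: zero_less_mult_iff) linarith
    ultimately show ?thesis by (simp add: order_tendstoD(1))
  qed
  then have "\<forall>\<^sub>F t in at_right 0. \<forall>i\<in>I. hp_value (G i) (x + t *\<^sub>R (z - x)) * hp_value (G i) x > 0"
    using assms(1) by (simp add: eventually_ball_finite)
  moreover have "\<forall>\<^sub>F t in at_right (0::real). t > 0"
    by (simp add: eventually_at_right_less)
  ultimately have "\<forall>\<^sub>F t in at_right (0::real). t > 0 \<and> (\<forall>i\<in>I. hp_value (G i) (x + t *\<^sub>R (z - x)) * hp_value (G i) x > 0)"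
    by eventually_elim blast
  then show ?thesis by (rule eventually_happens'[OF trivial_limit_at_right_real])
qed

lemma realizes_off_hp:
  assumes S: "affine S" "x \<in> S" "z \<in> S" and fin: "finite I" and r: "realizes G c I x"
    and z: "hp_value (G j) z \<noteq> 0" and x: "hp_value (G j) x = 0"
  shows "\<exists>y\<in>S. realizes G c I y \<and> hp_value (G j) y > 0"
    and "\<exists>y\<in>S. realizes G c I y \<and> hp_value (G j) y < 0"
proof -
  have towards: "\<exists>y\<in>S. realizes G c I y \<and> hp_value (G j) y * hp_value (G j) z' > 0"
    if z': "z' \<in> S" "hp_value (G j) z' \<noteq> 0" for z'
  proof -
    obtain t where t: "t > 0" "\<forall>i\<in>I. hp_value (G i) (x + t *\<^sub>R (z' - x)) * hp_value (G i) x > 0"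
      using signs_persist_near[OF fin, of G x z'] realizes_imp_not_on_hp[OF r] by blast
    let ?y = "x + t *\<^sub>R (z' - x)"
    have "?y \<in> S" using mem_affine_3_minus[OF S(1) S(2) z'(1) S(2)] .
    moreover have "hp_value (G j) ?y = t * hp_value (G j) z'"
      using x by (simp add: hp_value_def inner_add_right inner_diff_right algebra_simps)
    then have "hp_value (G j) ?y * hp_value (G j) z' > 0"
      using t(1) z'(2) by (simp add: mult.assoc zero_less_mult_iff) linarith
    ultimately show ?thesis using realizes_if_same_sign[OF r t(2)] by blast
  qed
  let ?z' = "x + (x - z)"
  have "?z' \<in> S" using mem_affine_3_minus[OF S(1) S(2) S(3) S(2), of "-1"] by simp
  moreover have "hp_value (G j) ?z' = - hp_value (G j) z"
    using x by (simp add: hp_value_def inner_add_right inner_diff_right algebra_simps)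
  ultimately obtain y2 where y2: "y2 \<in> S" "realizes G c I y2" "hp_value (G j) y2 * hp_value (G j) z < 0"
    using towards[of ?z'] z by auto
  obtain y1 where y1: "y1 \<in> S" "realizes G c I y1" "hp_value (G j) y1 * hp_value (G j) z > 0"
    using towards[OF S(3) z] by blast
  have "hp_value (G j) y1 > 0 \<and> hp_value (G j) y2 < 0 \<or> hp_value (G j) y1 < 0 \<and> hp_value (G j) y2 > 0"
    using y1(3) y2(3) by (auto simp: zero_less_mult_iff mult_less_0_iff)
  then show "\<exists>y\<in>S. realizes G c I y \<and> hp_value (G j) y > 0"
    and "\<exists>y\<in>S. realizes G c I y \<and> hp_value (G j) y < 0"
    using y1 y2 by blast+
qed

lemma realizes_on_hp_between:
  assumes S: "convex S" "x1 \<in> S" "x2 \<in> S" and r: "realizes G c I x1" "realizes G c I x2"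
    and L: "x1 \<in> flat G L" "x2 \<in> flat G L"
    and j: "hp_value (G j) x1 < 0" "hp_value (G j) x2 > 0"
  shows "\<exists>y\<in>S. realizes G c I y \<and> y \<in> flat G (insert j L)"
proof -
  define t where "t = hp_value (G j) x1 / (hp_value (G j) x1 - hp_value (G j) x2)"
  have t: "0 < t" "t < 1" using j by (auto simp: t_def divide_simps)
  define y where "y = (1 - t) *\<^sub>R x1 + t *\<^sub>R x2"
  have comb: "hp_value (G i) y = (1 - t) * hp_value (G i) x1 + t * hp_value (G i) x2" for i
    by (simp add: y_def hp_value_def inner_add_right algebra_simps)
  have "y \<in> S" unfolding y_def using S t by (intro convexD) auto
  moreover have "hp_value (G j) y = 0"
    unfolding comb using j by (simp add: t_def field_simps)
  then have "y \<in> flat G (insert j L)"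
    using L by (simp add: mem_flat comb)
  moreover have "realizes G c I y"
    using r t unfolding realizes_def comb
    by (auto intro!: add_pos_pos add_neg_neg mult_pos_pos mult_pos_neg)
  ultimately show ?thesis by blast
qed

lemma realizes_off_hp_somewhere:
  assumes "affine S" "finite I" "\<not> S \<subseteq> hp (G j)" "x \<in> S" "realizes G c I x"
  obtains y where "y \<in> S" "realizes G c I y" "hp_value (G j) y \<noteq> 0"
proof (cases "hp_value (G j) x = 0")
  case True
  obtain z where "z \<in> S" "hp_value (G j) z \<noteq> 0" using assms(3) mem_hp by blast
  with realizes_off_hp(1)[OF assms(1,4) _ assms(2,5) _ True] that show ?thesis by force
qed (use assms that in blast)

lemma realizes_on_both_sides_iff:
  assumes "affine S" "finite I" "\<not> S \<subseteq> hp (G j)"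
  shows "(\<exists>x\<in>S. realizes G c I x \<and> hp_value (G j) x < 0) \<and> (\<exists>x\<in>S. realizes G c I x \<and> hp_value (G j) x > 0)
    \<longleftrightarrow> (\<exists>x\<in>S \<inter> hp (G j). realizes G c I x)"
proof
  assume "(\<exists>x\<in>S. realizes G c I x \<and> hp_value (G j) x < 0) \<and> (\<exists>x\<in>S. realizes G c I x \<and> hp_value (G j) x > 0)"
  then obtain x1 x2 where "x1 \<in> S" "realizes G c I x1" "hp_value (G j) x1 < 0"
    and "x2 \<in> S" "realizes G c I x2" "hp_value (G j) x2 > 0" by blast
  with realizes_on_hp_between[OF affine_imp_convex[OF assms(1)], of x1 x2 G c I "{}" j]
  show "\<exists>x\<in>S \<inter> hp (G j). realizes G c I x" by (auto simp: flat_insert)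
next
  assume "\<exists>x\<in>S \<inter> hp (G j). realizes G c I x"
  then obtain x where "x \<in> S" "realizes G c I x" "hp_value (G j) x = 0" by (auto simp: mem_hp)
  moreover obtain z where "z \<in> S" "hp_value (G j) z \<noteq> 0" using assms(3) mem_hp by blast
  ultimately show "(\<exists>x\<in>S. realizes G c I x \<and> hp_value (G j) x < 0) \<and> (\<exists>x\<in>S. realizes G c I x \<and> hp_value (G j) x > 0)"
    using realizes_off_hp[OF assms(1) _ _ assms(2)] by blast
qed

section \<open>General position\<close>

lemma general_position_aff_dim: "general_position S I G k \<Longrightarrow> aff_dim S = int k"
  unfolding general_position_def by (auto dest: spec[of _ "{}"])

lemma general_position_subset: "general_position S I G k \<Longrightarrow> I0 \<subseteq> I \<Longrightarrow> general_position S I0 G k"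
  unfolding general_position_def by blast

lemma general_position_cong:
  "(\<And>i. i \<in> I \<Longrightarrow> G i = G' i) \<Longrightarrow> general_position S I G k \<longleftrightarrow> general_position S I G' k"
  unfolding general_position_def by (simp add: flat_cong[of _ G G'] subset_iff cong: conj_cong)

lemma general_position_Int_hp:
  assumes g: "general_position S (insert j I) G (Suc k)" and j: "j \<notin> I" and fin: "finite I"
  shows "general_position (S \<inter> hp (G j)) I G k"
  unfolding general_position_def
proof (intro conjI allI impI)
  fix J assume J: "J \<subseteq> I \<and> card J \<le> k"
  have "S \<inter> hp (G j) \<inter> flat G J = S \<inter> flat G (insert j J)" by (auto simp: flat_insert)
  moreover have "card (insert j J) = Suc (card J)"
    using J j finite_subset[OF _ fin] by (subst card_insert_disjoint) auto
  moreover have "aff_dim (S \<inter> flat G (insert j J)) = int (Suc k) - int (card (insert j J))"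
    using J \<open>card (insert j J) = Suc (card J)\<close>
    by (intro conjunct1[OF g[unfolded general_position_def], rule_format]) auto
  ultimately show "aff_dim (S \<inter> hp (G j) \<inter> flat G J) = int k - int (card J)" by simp
next
  fix J assume J: "J \<subseteq> I \<and> card J = Suc k"
  have "S \<inter> hp (G j) \<inter> flat G J = S \<inter> flat G (insert j J)" by (auto simp: flat_insert)
  moreover have "card (insert j J) = Suc (Suc k)"
    using J j finite_subset[OF _ fin] by (subst card_insert_disjoint) auto
  ultimately show "S \<inter> hp (G j) \<inter> flat G J = {}"
    using g J unfolding general_position_def by (metis insert_mono)
qed

lemma general_position_not_subset_hp:
  assumes g: "general_position S I G k" and j: "j \<in> I"
  shows "\<not> S \<subseteq> hp (G j)"
proof
  assume "S \<subseteq> hp (G j)"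
  then have "S \<inter> flat G {j} = S" by (auto simp: flat_def)
  with g j show False
    using general_position_aff_dim[OF g] unfolding general_position_def
    by (cases k) (auto dest: spec[of _ "{j}"])
qed

lemma general_position_flat_not_subset_hp:
  assumes g: "general_position S I G k" and "finite I"
    and J: "insert j M \<subseteq> I" "j \<notin> M" "card (insert j M) \<le> k"
  shows "\<not> S \<inter> flat G M \<subseteq> hp (G j)"
proof
  assume "S \<inter> flat G M \<subseteq> hp (G j)"
  then have eq: "S \<inter> flat G (insert j M) = S \<inter> flat G M" by (auto simp: flat_insert)
  have "M \<subseteq> I" using J(1) by blast
  then have "card (insert j M) = Suc (card M)" using J(2) finite_subset[OF _ assms(2)] by simp
  moreover have "aff_dim (S \<inter> flat G (insert j M)) = int k - int (card (insert j M))"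
    and "aff_dim (S \<inter> flat G M) = int k - int (card M)"
    using J \<open>card (insert j M) = Suc (card M)\<close>
    by (intro conjunct1[OF g[unfolded general_position_def], rule_format], auto)+
  ultimately show False using eq by simp
qed

section \<open>Counting cells\<close>

lemma finite_sign_class: "finite I \<Longrightarrow> finite (sign_class S I G)"
  by (rule finite_subset[of _ "Pow I"]) (auto simp: sign_class_def)

lemma sign_class_insert:
  assumes j: "j \<notin> I"
  shows "sign_class S (insert j I) G =
    {c \<in> sign_class S I G. \<exists>x\<in>S. realizes G c I x \<and> hp_value (G j) x < 0} \<union>
    insert j ` {c \<in> sign_class S I G. \<exists>x\<in>S. realizes G c I x \<and> hp_value (G j) x > 0}"
    (is "_ = ?X \<union> insert j ` ?Y")
proof (intro equalityI subsetI)
  fix c assume c: "c \<in> sign_class S (insert j I) G"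
  show "c \<in> ?X \<union> insert j ` ?Y"
  proof (cases "j \<in> c")
    case True
    then have "c = insert j (c - {j})" by blast
    moreover have "c - {j} \<in> ?Y"
      using c j True realizes_insert_pos[OF j, of G "c - {j}"] \<open>c = insert j (c - {j})\<close>
      by (auto simp: sign_class_def)
    ultimately show ?thesis by blast
  next
    case False
    then show ?thesis using c realizes_insert_neg[OF False, of G I] by (auto simp: sign_class_def)
  qed
next
  fix c assume "c \<in> ?X \<union> insert j ` ?Y"
  then show "c \<in> sign_class S (insert j I) G"
  proof
    assume "c \<in> ?X"
    then obtain x where "c \<subseteq> I" "x \<in> S" "realizes G c I x" "hp_value (G j) x < 0"
      by (auto simp: sign_class_def)
    moreover have "j \<notin> c" using \<open>c \<subseteq> I\<close> j by blast
    ultimately show ?thesis by (auto simp: sign_class_def realizes_insert_neg)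
  qed (use j in \<open>auto simp: sign_class_def realizes_insert_pos\<close>)
qed

lemma card_sign_class_insert:
  assumes S: "affine S" and fin: "finite I" and j: "j \<notin> I" and nsub: "\<not> S \<subseteq> hp (G j)"
  shows "card (sign_class S (insert j I) G) = card (sign_class S I G) + card (sign_class (S \<inter> hp (G j)) I G)"
proof -
  define X where "X = {c \<in> sign_class S I G. \<exists>x\<in>S. realizes G c I x \<and> hp_value (G j) x < 0}"
  define Y where "Y = {c \<in> sign_class S I G. \<exists>x\<in>S. realizes G c I x \<and> hp_value (G j) x > 0}"
  have finX: "finite X" and finY: "finite Y"
    unfolding X_def Y_def by (rule finite_subset[OF _ finite_sign_class[OF fin]], blast)+
  have "X \<union> Y = sign_class S I G"
  proof (intro equalityI subsetI)
    fix c assume "c \<in> sign_class S I G"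
    moreover from this obtain x where "x \<in> S" "realizes G c I x" by (auto simp: sign_class_def)
    then obtain y where "y \<in> S" "realizes G c I y" "hp_value (G j) y \<noteq> 0"
      by (rule realizes_off_hp_somewhere[where G = G and j = j, OF S fin nsub])
    ultimately show "c \<in> X \<union> Y"
      unfolding X_def Y_def by (cases "hp_value (G j) y > 0") (auto simp: not_less_iff_gr_or_eq)
  qed (auto simp: X_def Y_def)
  moreover have "X \<inter> Y = sign_class (S \<inter> hp (G j)) I G"
    using realizes_on_both_sides_iff[where G = G and j = j, OF S fin nsub]
    by (auto simp: X_def Y_def sign_class_def)
  moreover have "X \<inter> insert j ` Y = {}" and "inj_on (insert j) Y"
    using j by (auto simp: X_def Y_def sign_class_def inj_on_def)
  ultimately show ?thesis
    unfolding sign_class_insert[OF j] X_def[symmetric] Y_def[symmetric]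
    using card_Un_disjoint[OF finX finite_imageI[OF finY]] card_image[of "insert j" Y]
      card_Un_Int[OF finX finY] by simp
qed

lemma sum_choose_Suc:
  "(\<Sum>i\<le>Suc k. Suc m choose i) = (\<Sum>i\<le>Suc k. m choose i) + (\<Sum>i\<le>k. m choose i)"
  by (induction k) (simp_all add: sum.atMost_Suc)

lemma card_sign_class:
  assumes "finite I" "affine S" "general_position S I G k"
  shows "card (sign_class S I G) = (\<Sum>i\<le>k. card I choose i)"
  using assms
proof (induction I arbitrary: S k rule: finite_induct)
  case empty
  then have "S \<noteq> {}" using general_position_aff_dim by fastforce
  then have "sign_class S {} G = {{}}" by (auto simp: sign_class_def realizes_def)
  then show ?case by (induction k) (simp_all add: sum.atMost_Suc)
next
  case (insert j I)
  have nsub: "\<not> S \<subseteq> hp (G j)" using general_position_not_subset_hp[OF insert(5)] by blast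
  have IH: "card (sign_class S I G) = (\<Sum>i\<le>k. card I choose i)"
    using insert general_position_subset[OF insert(5)] by blast
  note rec = card_sign_class_insert[where G = G, OF insert(4,1,2) nsub]
  show ?case
  proof (cases k)
    case 0
    then have "S \<inter> hp (G j) = {}"
      using insert(5) unfolding general_position_def by (auto simp: flat_def dest: spec[of _ "{j}"])
    then show ?thesis using rec IH 0 by (simp add: sign_class_def)
  next
    case (Suc k')
    then have "card (sign_class (S \<inter> hp (G j)) I G) = (\<Sum>i\<le>k'. card I choose i)"
      using insert general_position_Int_hp[of S j I G k'] by (simp add: affine_Int affine_hp)
    then show ?thesis using rec IH insert(1,2) Suc by (simp add: sum_choose_Suc del: sum.atMost_Suc)
  qed
qed

lemma sign_class_extend_insert:
  assumes "affine S" "finite I" "\<not> S \<subseteq> hp (G j)" "c \<in> sign_class S I G"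
  shows "\<exists>c'\<in>sign_class S (insert j I) G. c' \<inter> I = c"
proof (cases "j \<in> I")
  case False
  obtain x where c: "c \<subseteq> I" and x: "x \<in> S" "realizes G c I x"
    using assms(4) by (auto simp: sign_class_def)
  obtain y where y: "y \<in> S" "realizes G c I y" "hp_value (G j) y \<noteq> 0"
    by (rule realizes_off_hp_somewhere[where G = G and j = j, OF assms(1-3) x])
  have "j \<notin> c" using c False by blast
  show ?thesis
  proof (cases "hp_value (G j) y > 0")
    case True
    then have "insert j c \<in> sign_class S (insert j I) G"
      using y c False by (auto simp: sign_class_def realizes_insert_pos)
    then show ?thesis using c False by (intro bexI[of _ "insert j c"]) auto
  next
    case False
    then have "c \<in> sign_class S (insert j I) G"
      using y c \<open>j \<notin> c\<close> by (auto simp: sign_class_def realizes_insert_neg)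
    then show ?thesis using c by auto
  qed
qed (use assms(4) in \<open>auto simp: sign_class_def insert_absorb\<close>)

lemma restrict_sign_class:
  assumes S: "affine S" and fin: "finite I" and T: "T \<subseteq> I" and nsub: "\<forall>j\<in>I. \<not> S \<subseteq> hp (G j)"
  shows "(\<lambda>c. c \<inter> T) ` sign_class S I G = sign_class S T G"
proof (intro equalityI subsetI)
  fix c assume "c \<in> (\<lambda>c. c \<inter> T) ` sign_class S I G"
  then show "c \<in> sign_class S T G" using T by (auto simp: sign_class_def realizes_def)
next
  fix c0 assume c0: "c0 \<in> sign_class S T G"
  have "\<exists>c\<in>sign_class S (T \<union> D) G. c \<inter> T = c0" if "finite D" "D \<subseteq> I" for D
    using that
  proof (induction D rule: finite_induct)
    case empty
    then show ?case using c0 by (auto simp: sign_class_def)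
  next
    case (insert j D)
    then obtain c where c: "c \<in> sign_class S (T \<union> D) G" "c \<inter> T = c0" by auto
    have "finite (T \<union> D)" using insert(1) finite_subset[OF T fin] by blast
    moreover have "\<not> S \<subseteq> hp (G j)" using insert(4) nsub by blast
    ultimately obtain c' where "c' \<in> sign_class S (insert j (T \<union> D)) G" "c' \<inter> (T \<union> D) = c"
      using sign_class_extend_insert[OF S _ _ c(1)] by blast
    then show ?case using c(2) by (intro bexI[of _ c']) auto
  qed
  from this[of "I - T"] have "\<exists>c\<in>sign_class S I G. c \<inter> T = c0"
    using fin T by (simp add: Un_absorb1)
  then show "c0 \<in> (\<lambda>c. c \<inter> T) ` sign_class S I G" by blast
qed

lemma sum_choose_less_power: "k < m \<Longrightarrow> (\<Sum>i\<le>k. m choose i) < 2 ^ m"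
proof -
  assume "k < m"
  then have "(\<Sum>i\<le>k. m choose i) \<le> (\<Sum>i<m. m choose i)" by (intro sum_mono2) auto
  also have "\<dots> < (\<Sum>i\<le>m. m choose i)" by (simp add: lessThan_Suc_atMost[symmetric])
  finally show ?thesis by (simp add: choose_row_sum)
qed

lemma sum_choose_eq_power: "m \<le> k \<Longrightarrow> (\<Sum>i\<le>k. m choose i) = 2 ^ m"
  by (subst sum.mono_neutral_right[of "{..k}" "{..m}"]) (auto simp: choose_row_sum)

lemma shatters_sign_class_iff:
  assumes S: "affine S" and fin: "finite I" and T: "T \<subseteq> I" and g: "general_position S I G k"
  shows "shatters (sign_class S I G) T \<longleftrightarrow> card T \<le> k"
proof -
  have finT: "finite T" using finite_subset[OF T fin] .
  have "shatters (sign_class S I G) T \<longleftrightarrow> sign_class S T G = Pow T"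
    unfolding shatters_def
    using restrict_sign_class[OF S fin T] general_position_not_subset_hp[OF g] by simp
  also have "\<dots> \<longleftrightarrow> card (sign_class S T G) = 2 ^ card T"
    using card_subset_eq[of "Pow T" "sign_class S T G"] finT by (auto simp: sign_class_def card_Pow)
  also have "\<dots> \<longleftrightarrow> card T \<le> k"
    using card_sign_class[OF finT S general_position_subset[OF g T]]
      sum_choose_less_power[of k "card T"] sum_choose_eq_power[of "card T" k] by (cases "card T \<le> k") auto
  finally show ?thesis .
qed

lemma maximum_class_sign_class:
  assumes S: "affine S" and g: "general_position S {..<n} G k" and "k \<le> n"
  shows "maximum_class n k (sign_class S {..<n} G)"
  unfolding maximum_class_def
proof (intro conjI)
  show "sign_class S {..<n} G \<subseteq> Pow {..<n}" by (auto simp: sign_class_def)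
  show "\<exists>T\<subseteq>{..<n}. card T = k \<and> shatters (sign_class S {..<n} G) T"
    using shatters_sign_class_iff[OF S _ _ g, of "{..<k}"] \<open>k \<le> n\<close> by (intro exI[of _ "{..<k}"]) auto
  show "\<forall>T. T \<subseteq> {..<n} \<and> shatters (sign_class S {..<n} G) T \<longrightarrow> card T \<le> k"
    using shatters_sign_class_iff[OF S _ _ g] by auto
  show "card (sign_class S {..<n} G) = (\<Sum>i\<le>k. n choose i)"
    using card_sign_class[OF _ S g] by simp
qed

section \<open>Cubes in a class of sign vectors\<close>

definition cube :: "nat set \<Rightarrow> nat set \<Rightarrow> nat set set" where
  "cube K b = {(b - K) \<union> T | T. T \<subseteq> K}"

lemma is_cube_iff: "is_cube n k Q \<longleftrightarrow> (\<exists>K b. K \<subseteq> {..<n} \<and> card K = k \<and> b \<subseteq> {..<n} \<and> Q = cube K b)"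
  unfolding is_cube_def cube_def ..

lemma cube_memI: "T \<subseteq> K \<Longrightarrow> (b - K) \<union> T \<in> cube K b"
  unfolding cube_def by blast

lemma cube_memD: "x \<in> cube K b \<Longrightarrow> i \<notin> K \<Longrightarrow> i \<in> x \<longleftrightarrow> i \<in> b"
  unfolding cube_def by blast

lemma cube_Diff: "cube K (b - K) = cube K b"
  unfolding cube_def by (simp add: Diff_idemp)

lemma cube_subset_cubeD:
  assumes sub: "cube K b \<subseteq> cube K' b'"
  shows "K \<subseteq> K'" and "b - K' = b' - K'"
proof -
  have b: "b - K \<in> cube K' b'" using subsetD[OF sub cube_memI[of "{}" K b]] by simp
  show KK: "K \<subseteq> K'"
  proof
    fix i assume i: "i \<in> K"
    have bi: "(b - K) \<union> {i} \<in> cube K' b'" using subsetD[OF sub cube_memI[of "{i}" K b]] i by simp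
    show "i \<in> K'"
    proof (rule ccontr)
      assume "i \<notin> K'"
      from cube_memD[OF b this] cube_memD[OF bi this] i show False by simp
    qed
  qed
  have "i \<in> b \<longleftrightarrow> i \<in> b'" if "i \<notin> K'" for i
    using cube_memD[OF b that] that KK by auto
  then show "b - K' = b' - K'" by blast
qed

lemma cube_eq_imp_eq: "cube K b = cube K' b' \<Longrightarrow> K = K'"
  using cube_subset_cubeD(1)[of K b K' b'] cube_subset_cubeD(1)[of K' b' K b] by auto

lemma cube_subset_cube_insert:
  assumes "j \<notin> K"
  shows "cube K b \<subseteq> cube (insert j K) b"
proof
  fix q assume "q \<in> cube K b"
  then obtain T where q: "q = (b - K) \<union> T" "T \<subseteq> K" by (auto simp: cube_def)
  then have "q = (b - insert j K) \<union> ((b \<inter> {j}) \<union> T)" using assms by auto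
  then show "q \<in> cube (insert j K) b" using q(2) cube_memI[of "(b \<inter> {j}) \<union> T" "insert j K" b] by auto
qed

text \<open>A cube lies in the class iff a single point on the flat of its free coordinates realizes
  its fixed signs: from such a point one moves off the hyperplanes one at a time, and conversely
  points realizing all sign patterns are pushed onto the flat by intermediate values.\<close>

lemma realizes_on_flat_if_all_signs:
  assumes S: "convex S" and J: "finite J" "I \<inter> J = {}"
    and all: "\<forall>\<sigma>\<subseteq>J. \<exists>x\<in>S. x \<in> flat G L \<and> realizes G c I x \<and> realizes G \<sigma> J x"
  shows "\<exists>x\<in>S. x \<in> flat G (L \<union> J) \<and> realizes G c I x"
  using J all
proof (induction J arbitrary: L rule: finite_induct)
  case empty
  then show ?case using empty.prems(2)[rule_format, of "{}"] by auto
next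
  case (insert j J)
  have disj: "I \<inter> J = {}" using insert(4) by auto
  have "\<forall>\<sigma>\<subseteq>J. \<exists>x\<in>S. x \<in> flat G (insert j L) \<and> realizes G c I x \<and> realizes G \<sigma> J x"
  proof (intro allI impI)
    fix \<sigma> assume \<sigma>: "\<sigma> \<subseteq> J"
    then have "j \<notin> \<sigma>" using insert(2) by auto
    have "\<sigma> \<subseteq> insert j J" "insert j \<sigma> \<subseteq> insert j J" using \<sigma> by auto
    then obtain x1 x2 where
      x1: "x1 \<in> S" "x1 \<in> flat G L" "realizes G c I x1" "realizes G \<sigma> (insert j J) x1" and
      x2: "x2 \<in> S" "x2 \<in> flat G L" "realizes G c I x2" "realizes G (insert j \<sigma>) (insert j J) x2"
      using insert(5) by meson
    let ?c = "(c \<inter> I) \<union> (\<sigma> \<inter> J)"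
    have r1: "realizes G \<sigma> J x1" "hp_value (G j) x1 < 0"
      using x1(4) realizes_insert_neg[OF \<open>j \<notin> \<sigma>\<close>, of G J x1] by auto
    have r2: "realizes G \<sigma> J x2" "hp_value (G j) x2 > 0"
      using x2(4) realizes_insert_pos[OF insert(2), of G \<sigma> x2] by auto
    have "realizes G ?c (I \<union> J) x1" "realizes G ?c (I \<union> J) x2"
      using x1(3) x2(3) r1(1) r2(1) by (simp_all add: realizes_Un[OF disj])
    then obtain y where "y \<in> S" "realizes G ?c (I \<union> J) y" "y \<in> flat G (insert j L)"
      using realizes_on_hp_between[OF S x1(1) x2(1) _ _ x1(2) x2(2) r1(2) r2(2)] by blast
    then show "\<exists>x\<in>S. x \<in> flat G (insert j L) \<and> realizes G c I x \<and> realizes G \<sigma> J x"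
      using realizes_Un[OF disj, of G c \<sigma> y] by blast
  qed
  from insert.IH[OF disj this] show ?case by simp
qed

lemma all_signs_near_flat:
  assumes S: "affine S" and fin: "finite I" and K: "K \<subseteq> I" "card K \<le> k"
    and g: "general_position S I G k"
    and x: "x \<in> S" "x \<in> flat G K" "realizes G b (I - K) x"
    and J: "finite J" "J \<subseteq> K" and \<sigma>: "\<sigma> \<subseteq> J"
  shows "\<exists>y\<in>S. y \<in> flat G (K - J) \<and> realizes G b (I - K) y \<and> realizes G \<sigma> J y"
  using J \<sigma>
proof (induction J arbitrary: \<sigma> rule: finite_induct)
  case empty
  then show ?case using x by (auto simp: realizes_def)
next
  case (insert j J)
  let ?M = "K - insert j J"
  have fin': "finite ((I - K) \<union> J)" and disj: "(I - K) \<inter> J = {}" using fin insert(1,4) by auto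
  obtain y where y: "y \<in> S" "y \<in> flat G (K - J)" "realizes G b (I - K) y" "realizes G (\<sigma> - {j}) J y"
    using insert(3,4,5) by blast
  let ?c = "(b \<inter> (I - K)) \<union> ((\<sigma> - {j}) \<inter> J)"
  have "insert j ?M \<subseteq> I" "card (insert j ?M) \<le> k"
    using insert(4) K card_mono[OF finite_subset[OF K(1) fin], of "insert j ?M"] by auto
  then have "\<not> S \<inter> flat G ?M \<subseteq> hp (G j)"
    using general_position_flat_not_subset_hp[OF g fin] by blast
  then obtain z where z: "z \<in> S \<inter> flat G ?M" "hp_value (G j) z \<noteq> 0"
    using mem_hp by blast
  have "y \<in> S \<inter> flat G ?M" "hp_value (G j) y = 0" "realizes G ?c ((I - K) \<union> J) y"
    using y insert(2,4) by (auto simp: mem_flat realizes_Un[OF disj])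
  note off = realizes_off_hp[OF affine_Int[OF S affine_flat] this(1) z(1) fin' this(3) z(2) this(2)]
  obtain y' where y': "y' \<in> S \<inter> flat G ?M" "realizes G ?c ((I - K) \<union> J) y'"
      "j \<in> \<sigma> \<longrightarrow> hp_value (G j) y' > 0" "j \<notin> \<sigma> \<longrightarrow> hp_value (G j) y' < 0"
    using off by (cases "j \<in> \<sigma>") blast+
  then have "realizes G b (I - K) y'" "realizes G (\<sigma> - {j}) J y'"
    using realizes_Un[OF disj] by blast+
  then have "realizes G \<sigma> (insert j J) y'" using y'(3,4) insert(2) by (auto simp: realizes_def)
  then show ?case using y' \<open>realizes G b (I - K) y'\<close> by blast
qed

lemma cube_subset_sign_class_iff:
  assumes S: "affine S" and fin: "finite I" and K: "K \<subseteq> I" "card K \<le> k" and b: "b \<subseteq> I"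
    and g: "general_position S I G k"
  shows "cube K b \<subseteq> sign_class S I G \<longleftrightarrow> (\<exists>x\<in>S. x \<in> flat G K \<and> realizes G b (I - K) x)"
proof
  assume sub: "cube K b \<subseteq> sign_class S I G"
  have "\<forall>\<sigma>\<subseteq>K. \<exists>x\<in>S. x \<in> flat G {} \<and> realizes G b (I - K) x \<and> realizes G \<sigma> K x"
  proof (intro allI impI)
    fix \<sigma> assume "\<sigma> \<subseteq> K"
    then have "(b - K) \<union> \<sigma> \<in> sign_class S I G" using sub cube_memI by blast
    then obtain x where "x \<in> S" "realizes G ((b - K) \<union> \<sigma>) I x" by (auto simp: sign_class_def)
    then show "\<exists>x\<in>S. x \<in> flat G {} \<and> realizes G b (I - K) x \<and> realizes G \<sigma> K x"
      using K(1) \<open>\<sigma> \<subseteq> K\<close> unfolding realizes_def by auto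
  qed
  from realizes_on_flat_if_all_signs[OF affine_imp_convex[OF S] finite_subset[OF K(1) fin] _ this]
  show "\<exists>x\<in>S. x \<in> flat G K \<and> realizes G b (I - K) x" by auto
next
  assume "\<exists>x\<in>S. x \<in> flat G K \<and> realizes G b (I - K) x"
  then obtain x where x: "x \<in> S" "x \<in> flat G K" "realizes G b (I - K) x" by blast
  show "cube K b \<subseteq> sign_class S I G"
  proof
    fix q assume "q \<in> cube K b"
    then obtain \<sigma> where q: "q = (b - K) \<union> \<sigma>" "\<sigma> \<subseteq> K" by (auto simp: cube_def)
    obtain y where "y \<in> S" "realizes G b (I - K) y" "realizes G \<sigma> K y"
      using all_signs_near_flat[OF S fin K g x finite_subset[OF K(1) fin] subset_refl q(2)] by auto
    moreover have "realizes G q I y \<longleftrightarrow> realizes G b (I - K) y \<and> realizes G \<sigma> K y"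
      using q K(1) unfolding realizes_def by blast
    ultimately show "q \<in> sign_class S I G" using q b K by (auto simp: sign_class_def)
  qed
qed

section \<open>Arrangements and induced arrangements\<close>

lemma concepts_of_components_eq_sign_class:
  "(\<lambda>c. {i\<in>I. c \<subseteq> pos_side (G i)}) ` components (S - (\<Union>i\<in>I. hp (G i))) = sign_class S I G"
proof -
  let ?U = "S - (\<Union>i\<in>I. hp (G i))"
  have concept_eq: "{i\<in>I. connected_component_set ?U x \<subseteq> pos_side (G i)} = {i\<in>I. hp_value (G i) x > 0}"
    if x: "x \<in> ?U" for x
  proof -
    let ?c = "connected_component_set ?U x"
    have xc: "x \<in> ?c" using x by simp
    have "?c \<subseteq> pos_side (G i) \<longleftrightarrow> hp_value (G i) x > 0" if i: "i \<in> I" for i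
    proof
      assume pos: "hp_value (G i) x > 0"
      have "?c \<subseteq> pos_side (G i) \<union> neg_side (G i)"
        using connected_component_subset[of ?U x] i by (force simp: mem_hp mem_pos_side mem_neg_side)
      moreover have "pos_side (G i) \<inter> ?c = {} \<or> neg_side (G i) \<inter> ?c = {}"
        by (rule connectedD[OF connected_connected_component])
          (use calculation in \<open>auto simp: pos_side_def neg_side_def open_halfspace_lt open_halfspace_gt\<close>)
      ultimately show "?c \<subseteq> pos_side (G i)"
        using pos xc by (auto simp: mem_pos_side)
    qed (use xc in \<open>auto simp only: mem_pos_side subset_iff\<close>)
    then show ?thesis by auto
  qed
  show ?thesis
  proof (intro equalityI subsetI)
    fix c assume "c \<in> (\<lambda>c. {i\<in>I. c \<subseteq> pos_side (G i)}) ` components ?U"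
    then obtain x where x: "x \<in> ?U" and c: "c = {i\<in>I. connected_component_set ?U x \<subseteq> pos_side (G i)}"
      by (auto simp: components_iff)
    have "realizes G c I x"
      using x unfolding c concept_eq[OF x] by (auto simp: realizes_def mem_hp)
    then show "c \<in> sign_class S I G" using x c by (auto simp: sign_class_def)
  next
    fix c assume "c \<in> sign_class S I G"
    then obtain x where c: "c \<subseteq> I" and x: "x \<in> S" and r: "realizes G c I x"
      by (auto simp: sign_class_def)
    have xU: "x \<in> ?U" using x r by (force simp: realizes_def mem_hp)
    have "c = {i\<in>I. connected_component_set ?U x \<subseteq> pos_side (G i)}"
      using c r unfolding concept_eq[OF xU] by (force simp: realizes_def)
    moreover have "connected_component_set ?U x \<in> components ?U" using xU by (auto simp: components_iff)
    ultimately show "c \<in> (\<lambda>c. {i\<in>I. c \<subseteq> pos_side (G i)}) ` components ?U" by blast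
  qed
qed

lemma arr_class_eq_sign_class: "arr_class n H = sign_class UNIV {..<n} H"
  unfolding arr_class_def concept_of_def
  using concepts_of_components_eq_sign_class[of "{..<n}" H UNIV] by (simp add: Collect_conj_eq lessThan_def)

lemma induced_class_eq_sign_class: "induced_class n H h = sign_class (hp h) {..<n} H"
  unfolding induced_class_def concept_of_def
  using concepts_of_components_eq_sign_class[of "{..<n}" H "hp h"] by (simp add: Collect_conj_eq lessThan_def)

lemma generic_hyperplane_iff:
  "generic_hyperplane n (H :: nat \<Rightarrow> 'a::euclidean_space ohp) h \<longleftrightarrow>
     fst h \<noteq> 0 \<and> general_position UNIV {..<Suc n} (H(n := h)) DIM('a)"
  unfolding generic_hyperplane_def general_position_def flat_def by simp

lemma simple_arrangement_general_position:
  "simple_arrangement n (H :: nat \<Rightarrow> 'a::euclidean_space ohp) \<Longrightarrow> general_position UNIV {..<n} H DIM('a)"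
  unfolding simple_arrangement_def general_position_def flat_def by simp

lemma generic_hyperplane_general_position:
  fixes H :: "nat \<Rightarrow> 'a::euclidean_space ohp"
  assumes "generic_hyperplane n H h"
  shows "general_position (hp h) {..<n} H (DIM('a) - 1)"
proof -
  have "general_position UNIV (insert n {..<n}) (H(n := h)) (Suc (DIM('a) - 1))"
    using assms DIM_positive[where 'a = 'a] lessThan_Suc[of n]
    unfolding generic_hyperplane_def general_position_def flat_def by (simp del: lessThan_Suc)
  from general_position_Int_hp[OF this] have "general_position (hp h) {..<n} (H(n := h)) (DIM('a) - 1)"
    by simp
  then show ?thesis by (rule general_position_cong[THEN iffD1, rotated]) simp
qed

theorem induced_class_maximum:
  fixes H :: "nat \<Rightarrow> 'a::euclidean_space ohp"
  assumes "simple_arrangement n H" and "generic_hyperplane n H h"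
  shows "maximum_class n (DIM('a) - 1) (induced_class n H h)"
  using assms unfolding induced_class_eq_sign_class simple_arrangement_def
  by (intro maximum_class_sign_class[OF affine_hp generic_hyperplane_general_position]) auto

lemma induced_class_subset_arr_class: "induced_class n H h \<subseteq> arr_class n H"
  unfolding induced_class_eq_sign_class arr_class_eq_sign_class by (auto simp: sign_class_def)

lemma simple_arrangement_aff_dim_flat:
  fixes H :: "nat \<Rightarrow> 'a::euclidean_space ohp"
  assumes "simple_arrangement n H" "K \<subseteq> {..<n}" "card K \<le> DIM('a)"
  shows "aff_dim (flat H K) = int DIM('a) - int (card K)"
  using assms unfolding simple_arrangement_def flat_def by blast

lemma simple_arrangement_flat_empty:
  fixes H :: "nat \<Rightarrow> 'a::euclidean_space ohp"
  assumes "simple_arrangement n H" "K \<subseteq> {..<n}" "card K = Suc DIM('a)"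
  shows "flat H K = {}"
  using assms unfolding simple_arrangement_def flat_def by simp

lemma simple_arrangement_flat_singleton:
  fixes H :: "nat \<Rightarrow> 'a::euclidean_space ohp"
  assumes "simple_arrangement n H" "K \<subseteq> {..<n}" "card K = DIM('a)"
  shows "\<exists>v. flat H K = {v}"
  using simple_arrangement_aff_dim_flat[OF assms(1,2)] assms(3) by (simp add: aff_dim_eq_0)

lemma cube_subset_arr_class_iff:
  fixes H :: "nat \<Rightarrow> 'a::euclidean_space ohp"
  assumes "simple_arrangement n H" "K \<subseteq> {..<n}" "card K \<le> DIM('a)" "b \<subseteq> {..<n}"
  shows "cube K b \<subseteq> arr_class n H \<longleftrightarrow> (\<exists>x\<in>flat H K. realizes H b ({..<n} - K) x)"
  using cube_subset_sign_class_iff[OF affine_UNIV _ assms(2-4) simple_arrangement_general_position[OF assms(1)]]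
  by (auto simp: arr_class_eq_sign_class)

lemma cube_subset_induced_class_iff:
  fixes H :: "nat \<Rightarrow> 'a::euclidean_space ohp"
  assumes "generic_hyperplane n H h" "K \<subseteq> {..<n}" "card K \<le> DIM('a) - 1" "b \<subseteq> {..<n}"
  shows "cube K b \<subseteq> induced_class n H h \<longleftrightarrow> (\<exists>x\<in>hp h \<inter> flat H K. realizes H b ({..<n} - K) x)"
  using cube_subset_sign_class_iff[OF affine_hp _ assms(2-4) generic_hyperplane_general_position[OF assms(1)]]
  by (auto simp: induced_class_eq_sign_class)

section \<open>Neighbours of a point on the real line\<close>

text \<open>\<open>j\<close> is a neighbour of \<open>t0\<close> when no other value \<open>t i\<close> lies between \<open>t j\<close> and \<open>t0\<close>
  or coincides with one of them.\<close>

definition neighbours :: "nat set \<Rightarrow> (nat \<Rightarrow> real) \<Rightarrow> real \<Rightarrow> nat set" where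
  "neighbours J t t0 = {j\<in>J. \<forall>i\<in>J - {j}. (t j - t i) * (t0 - t i) > 0}"

lemma neighbours_uminus: "neighbours J (\<lambda>i. - t i) (- t0) = neighbours J t t0"
proof -
  have "(- t j - - t i) * (- t0 - - t i) = (t j - t i) * (t0 - t i)" for i j
    by (simp add: algebra_simps)
  then show ?thesis by (simp add: neighbours_def)
qed

lemma card_neighbours_below:
  assumes fin: "finite J" and "J \<noteq> {}" and inj: "inj_on t J" and below: "\<forall>i\<in>J. t0 < t i"
  shows "card (neighbours J t t0) = 1"
proof -
  have "Min (t ` J) \<in> t ` J" using fin \<open>J \<noteq> {}\<close> by simp
  then obtain m where m: "m \<in> J" "t m = Min (t ` J)" by (metis imageE)
  have lt: "t m < t i" if "i \<in> J" "i \<noteq> m" for i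
  proof -
    have "t m \<le> t i" using fin m(2) that(1) by simp
    moreover have "t m \<noteq> t i" using inj_onD[OF inj, of m i] m(1) that by blast
    ultimately show ?thesis by simp
  qed
  have "neighbours J t t0 = {m}"
  proof (intro equalityI subsetI)
    fix j assume j: "j \<in> neighbours J t t0"
    show "j \<in> {m}"
    proof (rule ccontr)
      assume "j \<notin> {m}"
      then have "(t j - t m) * (t0 - t m) > 0" "t j - t m > 0" "t0 - t m < 0"
        using j m(1) lt[of j] below by (auto simp: neighbours_def)
      then show False by (simp add: zero_less_mult_iff)
    qed
  qed (use m(1) lt below in \<open>auto simp: neighbours_def intro!: mult_neg_neg\<close>)
  then show ?thesis by simp
qed

lemma max_below_in_neighbours:
  assumes fin: "finite J" and inj: "inj_on t J" and t0: "t0 \<notin> t ` J"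
    and m: "m \<in> J" "t m < t0" and max: "\<And>i. i \<in> J \<Longrightarrow> t i < t0 \<Longrightarrow> t i \<le> t m"
  shows "m \<in> neighbours J t t0"
  unfolding neighbours_def
proof (intro CollectI conjI ballI)
  fix i assume i: "i \<in> J - {m}"
  show "(t m - t i) * (t0 - t i) > 0"
  proof (cases "t i < t0")
    case True
    then have "t i < t m" using max[of i] inj_onD[OF inj, of i m] m(1) i by force
    then show ?thesis using True by (intro mult_pos_pos) auto
  next
    case False
    then have "t0 < t i" using t0 i by force
    then show ?thesis using m(2) by (intro mult_neg_neg) auto
  qed
qed (rule m(1))

lemma two_neighbours:
  assumes fin: "finite J" and inj: "inj_on t J" and t0: "t0 \<notin> t ` J"
    and i1: "i1 \<in> J" "t i1 < t0" and i2: "i2 \<in> J" "t0 < t i2"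
  shows "card (neighbours J t t0) \<ge> 2"
proof -
  have "finite (t ` {i\<in>J. t i < t0})" "t ` {i\<in>J. t i < t0} \<noteq> {}" using fin i1 by auto
  from Max_in[OF this] obtain m1 where m1: "m1 \<in> J" "t m1 < t0" "t m1 = Max (t ` {i\<in>J. t i < t0})"
    by auto
  have "m1 \<in> neighbours J t t0"
    using fin m1 by (intro max_below_in_neighbours[OF fin inj t0 m1(1,2)]) auto
  have "finite ((\<lambda>i. - t i) ` {i\<in>J. - t i < - t0})" "(\<lambda>i. - t i) ` {i\<in>J. - t i < - t0} \<noteq> {}"
    using fin i2 by auto
  from Max_in[OF this] obtain m2 where m2: "m2 \<in> J" "- t m2 < - t0" "- t m2 = Max ((\<lambda>i. - t i) ` {i\<in>J. - t i < - t0})"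
    by auto
  have "inj_on (\<lambda>i. - t i) J" using inj by (auto simp: inj_on_def)
  moreover have "- t0 \<notin> (\<lambda>i. - t i) ` J" using t0 by auto
  ultimately have "m2 \<in> neighbours J t t0"
    using fin m2 max_below_in_neighbours[of J "\<lambda>i. - t i" "- t0" m2] by (auto simp: neighbours_uminus)
  moreover have "m1 \<noteq> m2" using m1(2) m2(2) by auto
  moreover have "finite (neighbours J t t0)" using fin by (simp add: neighbours_def)
  ultimately show ?thesis
    using \<open>m1 \<in> neighbours J t t0\<close> card_mono[of "neighbours J t t0" "{m1, m2}"] by auto
qed

lemma card_neighbours_eq_1_iff:
  assumes fin: "finite J" and "J \<noteq> {}" and inj: "inj_on t J" and t0: "t0 \<notin> t ` J"
  shows "card (neighbours J t t0) = 1 \<longleftrightarrow> (\<forall>i\<in>J. t0 < t i) \<or> (\<forall>i\<in>J. t i < t0)"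
proof
  assume one: "card (neighbours J t t0) = 1"
  show "(\<forall>i\<in>J. t0 < t i) \<or> (\<forall>i\<in>J. t i < t0)"
  proof (rule ccontr)
    assume "\<not> ?thesis"
    then obtain i1 i2 where i: "i1 \<in> J" "\<not> t0 < t i1" "i2 \<in> J" "\<not> t i2 < t0" by blast
    moreover have "t i1 \<noteq> t0" "t i2 \<noteq> t0" using t0 i(1,3) by force+
    ultimately have "t i1 < t0" "t0 < t i2" by auto
    with two_neighbours[OF fin inj t0 i(1) _ i(3)] one show False by simp
  qed
next
  have "inj_on (\<lambda>i. - t i) J" using inj by (auto simp: inj_on_def)
  then show "(\<forall>i\<in>J. t0 < t i) \<or> (\<forall>i\<in>J. t i < t0) \<Longrightarrow> card (neighbours J t t0) = 1"
    using card_neighbours_below[OF fin \<open>J \<noteq> {}\<close> inj]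
      card_neighbours_below[OF fin \<open>J \<noteq> {}\<close>, of "\<lambda>i. - t i" "- t0"] by (auto simp: neighbours_uminus)
qed

section \<open>Lines of a simple arrangement and the boundary\<close>

lemma line_parametrization:
  fixes L :: "'a::euclidean_space set"
  assumes L: "affine L" "aff_dim L = 1" and p: "L \<inter> {x. a \<bullet> x = \<beta>} = {p}"
  obtains w where "a \<bullet> w = 1" "\<And>s. p + s *\<^sub>R w \<in> L" "\<And>y. y \<in> L \<Longrightarrow> y = p + (a \<bullet> y - \<beta>) *\<^sub>R w"
proof -
  have pL: "p \<in> L" and ap: "a \<bullet> p = \<beta>" using p by auto
  have "L \<noteq> {p}" using L(2) by auto
  then obtain z where z: "z \<in> L" "z \<noteq> p" using pL by blast
  then have az: "a \<bullet> z \<noteq> \<beta>" using p by auto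
  define w where "w = (1 / (a \<bullet> z - \<beta>)) *\<^sub>R (z - p)"
  have aw: "a \<bullet> w = 1" using az ap by (simp add: w_def inner_diff_right)
  have line: "p + s *\<^sub>R w \<in> L" for s
    using mem_affine_3_minus[OF L(1) pL z(1) pL, of "s / (a \<bullet> z - \<beta>)"] by (simp add: w_def)
  have "y = p + (a \<bullet> y - \<beta>) *\<^sub>R w" if y: "y \<in> L" for y
  proof -
    let ?q = "p + (a \<bullet> y - \<beta>) *\<^sub>R w"
    have "y + (p - ?q) \<in> L" using mem_affine_3_minus[OF L(1) y pL line, of 1] by simp
    moreover have "a \<bullet> (y + (p - ?q)) = \<beta>" using ap aw by (simp add: inner_add_right inner_diff_right)
    ultimately have "y + (p - ?q) = p" using p by blast
    then show ?thesis by (simp add: algebra_simps)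
  qed
  with aw line that show ?thesis by blast
qed

text \<open>The line \<open>flat H K'\<close> meets the transversal hyperplane \<open>a \<bullet> x = \<beta>\<close> only at \<open>p\<close>,
  so \<open>a \<bullet> y\<close> is a coordinate on it; the remaining hyperplanes cross it in distinct vertices.\<close>

locale arrangement_line =
  fixes H :: "nat \<Rightarrow> 'a::euclidean_space ohp" and n :: nat and K' :: "nat set"
    and a :: 'a and \<beta> :: real and p :: 'a
  assumes simple: "simple_arrangement n H"
    and K': "K' \<subseteq> {..<n}" "card K' = DIM('a) - 1"
    and meets: "flat H K' \<inter> {x. a \<bullet> x = \<beta>} = {p}"
begin

abbreviation line :: "'a set" where "line \<equiv> flat H K'"

abbreviation crossing :: "nat set" where "crossing \<equiv> {..<n} - K'"

lemma finite_K': "finite K'"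
  using K'(1) finite_subset by blast

lemma Suc_card_K': "Suc (card K') = DIM('a)"
  using K'(2) DIM_positive[where 'a = 'a] by linarith

lemma card_insert_K': "i \<in> crossing \<Longrightarrow> card (insert i K') = DIM('a)"
  using finite_K' Suc_card_K' by simp

lemma aff_dim_line: "aff_dim line = 1"
  using simple_arrangement_aff_dim_flat[OF simple K'(1)] K'(2) DIM_positive[where 'a = 'a] by simp

lemma line_direction:
  obtains w where "a \<bullet> w = 1" "\<And>s. p + s *\<^sub>R w \<in> line" "\<And>y. y \<in> line \<Longrightarrow> y = p + (a \<bullet> y - \<beta>) *\<^sub>R w"
  using line_parametrization[OF affine_flat aff_dim_line meets] by blast

lemma inner_inj_on_line: "y1 \<in> line \<Longrightarrow> y2 \<in> line \<Longrightarrow> a \<bullet> y1 = a \<bullet> y2 \<Longrightarrow> y1 = y2"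
  by (metis line_direction)

lemma inner_surj_on_line: "\<exists>y\<in>line. a \<bullet> y = c"
proof -
  obtain w where w: "a \<bullet> w = 1" "\<And>s. p + s *\<^sub>R w \<in> line"
    and "\<And>y. y \<in> line \<Longrightarrow> y = p + (a \<bullet> y - \<beta>) *\<^sub>R w" by (metis line_direction)
  have "a \<bullet> (p + (c - \<beta>) *\<^sub>R w) = c" using meets w(1) by (auto simp: inner_add_right)
  then show ?thesis using w(2) by blast
qed

lemma crossing_nonempty: "crossing \<noteq> {}"
proof
  assume "crossing = {}"
  then have "n \<le> card K'" using card_mono[OF finite_K', of "{..<n}"] by auto
  moreover have "DIM('a) \<le> n" using simple by (simp add: simple_arrangement_def)
  ultimately show False using Suc_card_K' by linarith
qed

definition vertex :: "nat \<Rightarrow> 'a" where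
  "vertex i = (THE v. flat H (insert i K') = {v})"

lemma flat_insert_eq_vertex:
  assumes "i \<in> crossing"
  shows "flat H (insert i K') = {vertex i}"
proof -
  obtain v where v: "flat H (insert i K') = {v}"
    using simple_arrangement_flat_singleton[OF simple _ card_insert_K'[OF assms]] assms K'(1) by auto
  then have "vertex i = v" unfolding vertex_def by simp
  then show ?thesis using v by simp
qed

lemma vertex_on_line: "i \<in> crossing \<Longrightarrow> vertex i \<in> line"
  and hp_value_vertex: "i \<in> crossing \<Longrightarrow> hp_value (H i) (vertex i) = 0"
  using flat_insert_eq_vertex[of i] by (auto simp: flat_insert mem_hp)

lemma hp_value_on_line:
  assumes i: "i \<in> crossing"
  obtains \<alpha> where "\<alpha> \<noteq> 0" "\<And>y. y \<in> line \<Longrightarrow> hp_value (H i) y = \<alpha> * (a \<bullet> y - a \<bullet> vertex i)"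
proof -
  obtain w where aw: "a \<bullet> w = 1" and w: "\<And>s. p + s *\<^sub>R w \<in> line"
    "\<And>y. y \<in> line \<Longrightarrow> y = p + (a \<bullet> y - \<beta>) *\<^sub>R w" by (metis line_direction)
  have affine_in_param: "hp_value (H i) y = hp_value (H i) p + (a \<bullet> y - \<beta>) * (fst (H i) \<bullet> w)"
    if "y \<in> line" for y
    using arg_cong[OF w(2)[OF that], of "hp_value (H i)"] by (simp add: hp_value_def inner_add_right)
  have eq: "hp_value (H i) y = (fst (H i) \<bullet> w) * (a \<bullet> y - a \<bullet> vertex i)" if "y \<in> line" for y
    using affine_in_param[OF that] affine_in_param[OF vertex_on_line[OF i]] hp_value_vertex[OF i]
    by (simp add: algebra_simps)
  have "fst (H i) \<bullet> w \<noteq> 0"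
  proof
    assume "fst (H i) \<bullet> w = 0"
    then have "p \<in> flat H (insert i K')" "p + w \<in> flat H (insert i K')"
      using eq[of p] eq[of "p + w"] meets w(1)[of 1] by (auto simp: flat_insert mem_hp)
    then show False using flat_insert_eq_vertex[OF i] aw by auto
  qed
  with eq that show ?thesis by blast
qed

lemma same_sign_on_line_iff:
  assumes "i \<in> crossing" "y1 \<in> line" "y2 \<in> line"
  shows "hp_value (H i) y1 * hp_value (H i) y2 > 0 \<longleftrightarrow> (a \<bullet> y1 - a \<bullet> vertex i) * (a \<bullet> y2 - a \<bullet> vertex i) > 0"
proof -
  obtain \<alpha> where "\<alpha> \<noteq> 0" and eq: "\<And>y. y \<in> line \<Longrightarrow> hp_value (H i) y = \<alpha> * (a \<bullet> y - a \<bullet> vertex i)"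
    using hp_value_on_line[OF assms(1)] by blast
  then have "\<alpha> * \<alpha> > 0" by (simp add: zero_less_mult_iff) linarith
  then show ?thesis
    unfolding eq[OF assms(2)] eq[OF assms(3)]
    by (smt (verit) mult.assoc mult.left_commute zero_less_mult_iff)
qed

lemma inj_on_vertex_coordinate: "inj_on (\<lambda>i. a \<bullet> vertex i) crossing"
proof (rule inj_onI, rule ccontr)
  fix i j assume i: "i \<in> crossing" and j: "j \<in> crossing" and "a \<bullet> vertex i = a \<bullet> vertex j" "i \<noteq> j"
  then have "vertex i \<in> flat H (insert i (insert j K'))"
    using inner_inj_on_line[OF vertex_on_line[OF i] vertex_on_line[OF j]]
      flat_insert_eq_vertex[OF i] flat_insert_eq_vertex[OF j] by (auto simp: flat_insert)
  moreover have "flat H (insert i (insert j K')) = {}"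
    using simple_arrangement_flat_empty[OF simple, of "insert i (insert j K')"] i j \<open>i \<noteq> j\<close>
      K'(1) finite_K' Suc_card_K' by auto
  ultimately show False by simp
qed

lemma coordinate_not_vertex:
  assumes "x \<in> line" "realizes H b crossing x"
  shows "a \<bullet> x \<notin> (\<lambda>i. a \<bullet> vertex i) ` crossing"
proof
  assume "a \<bullet> x \<in> (\<lambda>i. a \<bullet> vertex i) ` crossing"
  then obtain i where i: "i \<in> crossing" "a \<bullet> x = a \<bullet> vertex i" by blast
  then have "x = vertex i" using inner_inj_on_line[OF assms(1) vertex_on_line[OF i(1)]] by simp
  then show False using realizes_imp_not_on_hp[OF assms(2) i(1)] hp_value_vertex[OF i(1)] by simp
qed

lemma vertex_in_flat:
  assumes "i \<in> crossing"
  shows "insert i K' \<subseteq> {..<n}" "card (insert i K') = DIM('a)" "vertex i \<in> flat H (insert i K')"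
  using assms K'(1) card_insert_K' flat_insert_eq_vertex by auto

lemma realizing_points_same_side:
  assumes "x1 \<in> line" "x2 \<in> line" "realizes H b crossing x1" "realizes H b crossing x2" "i \<in> crossing"
  shows "(a \<bullet> x1 - a \<bullet> vertex i) * (a \<bullet> x2 - a \<bullet> vertex i) > 0"
  using realizes_same_sign[OF assms(3-5)] same_sign_on_line_iff[OF assms(5,1,2)] by simp

lemma neighbour_iff_vertex_realizes:
  assumes j: "j \<in> crossing" and x0: "x0 \<in> line" "realizes H b crossing x0"
  shows "j \<in> neighbours crossing (\<lambda>i. a \<bullet> vertex i) (a \<bullet> x0)
    \<longleftrightarrow> realizes H b ({..<n} - insert j K') (vertex j)"
proof -
  let ?I = "{..<n} - insert j K'"
  have x0': "realizes H b ?I x0" by (rule realizes_subset[OF _ x0(2)]) blast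
  have "crossing - {j} = ?I" by blast
  then have "j \<in> neighbours crossing (\<lambda>i. a \<bullet> vertex i) (a \<bullet> x0)
      \<longleftrightarrow> (\<forall>i\<in>?I. (a \<bullet> vertex j - a \<bullet> vertex i) * (a \<bullet> x0 - a \<bullet> vertex i) > 0)"
    using j by (simp add: neighbours_def)
  also have "\<dots> \<longleftrightarrow> (\<forall>i\<in>?I. hp_value (H i) (vertex j) * hp_value (H i) x0 > 0)"
  proof (rule ball_cong[OF refl])
    fix i assume "i \<in> ?I"
    then show "(a \<bullet> vertex j - a \<bullet> vertex i) * (a \<bullet> x0 - a \<bullet> vertex i) > 0
      \<longleftrightarrow> hp_value (H i) (vertex j) * hp_value (H i) x0 > 0"
      using same_sign_on_line_iff[of i, OF _ vertex_on_line[OF j] x0(1)] by simp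
  qed
  also have "\<dots> \<longleftrightarrow> realizes H b ?I (vertex j)"
  proof
    assume "\<forall>i\<in>?I. hp_value (H i) (vertex j) * hp_value (H i) x0 > 0"
    then show "realizes H b ?I (vertex j)" by (rule realizes_if_same_sign[OF x0'])
  next
    assume "realizes H b ?I (vertex j)"
    then show "\<forall>i\<in>?I. hp_value (H i) (vertex j) * hp_value (H i) x0 > 0"
      using realizes_same_sign[OF _ x0'] by blast
  qed
  finally show ?thesis .
qed

lemma cubes_containing_eq_neighbours:
  assumes b: "b \<subseteq> {..<n}" and x0: "x0 \<in> line" "realizes H b crossing x0"
  shows "{P \<in> cubes n DIM('a) (arr_class n H). cube K' b \<subseteq> P} =
         (\<lambda>j. cube (insert j K') b) ` neighbours crossing (\<lambda>i. a \<bullet> vertex i) (a \<bullet> x0)"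
proof (intro equalityI subsetI)
  fix P assume "P \<in> {P \<in> cubes n DIM('a) (arr_class n H). cube K' b \<subseteq> P}"
  then obtain K b' where K: "K \<subseteq> {..<n}" "card K = DIM('a)" "b' \<subseteq> {..<n}" and P: "P = cube K b'"
    and arr: "P \<subseteq> arr_class n H" and sub: "cube K' b \<subseteq> P"
    by (auto simp: cubes_def is_cube_iff)
  have KK: "K' \<subseteq> K" and bb': "b - K = b' - K" using cube_subset_cubeD[OF sub[unfolded P]] by auto
  have finK: "finite K" using K(1) finite_subset by blast
  have "K \<noteq> K'" using K(2) Suc_card_K' by auto
  then obtain j where "j \<in> K" "j \<notin> K'" using KK by blast
  then have j: "j \<in> crossing" using K(1) by blast
  have Kj: "K = insert j K'"
    using card_subset_eq[OF finK, of "insert j K'"] \<open>j \<in> K\<close> KK K(2) card_insert_K'[OF j] by simp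
  have "P = cube K b" using P bb' cube_Diff[of K b] cube_Diff[of K b'] by metis
  obtain x where "x \<in> flat H K" "realizes H b' ({..<n} - K) x"
    using arr cube_subset_arr_class_iff[OF simple K(1) _ K(3)] K(2) P by auto
  moreover have "b \<inter> ({..<n} - K) = b' \<inter> ({..<n} - K)" using bb' by blast
  ultimately have "realizes H b ({..<n} - insert j K') (vertex j)"
    using flat_insert_eq_vertex[OF j] Kj realizes_cong[of b "{..<n} - K" b'] by auto
  then show "P \<in> (\<lambda>j. cube (insert j K') b) ` neighbours crossing (\<lambda>i. a \<bullet> vertex i) (a \<bullet> x0)"
    using neighbour_iff_vertex_realizes[OF j x0] \<open>P = cube K b\<close> Kj by blast
next
  fix P assume "P \<in> (\<lambda>j. cube (insert j K') b) ` neighbours crossing (\<lambda>i. a \<bullet> vertex i) (a \<bullet> x0)"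
  then obtain j where j: "j \<in> crossing" and P: "P = cube (insert j K') b"
    and "j \<in> neighbours crossing (\<lambda>i. a \<bullet> vertex i) (a \<bullet> x0)"
    by (auto simp: neighbours_def)
  then have "realizes H b ({..<n} - insert j K') (vertex j)"
    using neighbour_iff_vertex_realizes[OF j x0] by blast
  then have "P \<subseteq> arr_class n H"
    using cube_subset_arr_class_iff[OF simple vertex_in_flat(1)[OF j] _ b] vertex_in_flat[OF j] P by auto
  moreover have "is_cube n DIM('a) P" unfolding is_cube_iff P using vertex_in_flat[OF j] b by blast
  moreover have "cube K' b \<subseteq> P" using P cube_subset_cube_insert[of j K' b] j by auto
  ultimately show "P \<in> {P \<in> cubes n DIM('a) (arr_class n H). cube K' b \<subseteq> P}"
    by (auto simp: cubes_def)
qed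

lemma cube_in_boundary_iff:
  assumes b: "b \<subseteq> {..<n}" and x0: "x0 \<in> line" "realizes H b crossing x0"
  shows "cube K' b \<in> boundary n DIM('a) (arr_class n H) \<longleftrightarrow>
    (\<forall>i\<in>crossing. a \<bullet> x0 < a \<bullet> vertex i) \<or> (\<forall>i\<in>crossing. a \<bullet> vertex i < a \<bullet> x0)"
proof -
  have "cube K' b \<subseteq> arr_class n H"
    using cube_subset_arr_class_iff[OF simple K'(1) _ b] K'(2) x0 by auto
  moreover have "is_cube n (DIM('a) - 1) (cube K' b)" using K' b by (auto simp: is_cube_iff)
  moreover have "inj_on (\<lambda>j. cube (insert j K') b) (neighbours crossing (\<lambda>i. a \<bullet> vertex i) (a \<bullet> x0))"
    by (rule inj_onI) (auto simp: neighbours_def dest!: cube_eq_imp_eq)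
  then have "card {P \<in> cubes n DIM('a) (arr_class n H). cube K' b \<subseteq> P} =
      card (neighbours crossing (\<lambda>i. a \<bullet> vertex i) (a \<bullet> x0))"
    unfolding cubes_containing_eq_neighbours[OF b x0] by (rule card_image)
  ultimately show ?thesis
    unfolding boundary_def
    using card_neighbours_eq_1_iff[OF _ crossing_nonempty inj_on_vertex_coordinate coordinate_not_vertex[OF x0]]
    by (simp add: cubes_def)
qed

lemma cube_subset_induced_class_if_beyond:
  assumes b: "b \<subseteq> {..<n}" and x0: "x0 \<in> line" "realizes H b crossing x0"
    and g: "generic_hyperplane n H (a, \<gamma>)"
    and beyond: "\<forall>i\<in>crossing. (\<gamma> - a \<bullet> vertex i) * (a \<bullet> x0 - a \<bullet> vertex i) > 0"
  shows "cube K' b \<subseteq> induced_class n H (a, \<gamma>)"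
proof -
  obtain y where y: "y \<in> line" "a \<bullet> y = \<gamma>" using inner_surj_on_line by blast
  then have "realizes H b crossing y"
    using realizes_if_same_sign[OF x0(2)] same_sign_on_line_iff[OF _ y(1) x0(1)] beyond by auto
  moreover have "y \<in> hp (a, \<gamma>)" using y by (simp add: hp_def)
  ultimately show ?thesis
    using cube_subset_induced_class_iff[OF g K'(1) _ b] K'(2) y(1) by auto
qed

lemma boundary_cube_subset_enclosing_induced_class:
  assumes enclose: "\<forall>i\<in>crossing. \<gamma>1 < a \<bullet> vertex i \<and> a \<bullet> vertex i < \<gamma>2"
    and g: "generic_hyperplane n H (a, \<gamma>1)" "generic_hyperplane n H (a, \<gamma>2)"
    and b: "b \<subseteq> {..<n}" and x0: "x0 \<in> line" "realizes H b crossing x0"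
    and bd: "cube K' b \<in> boundary n DIM('a) (arr_class n H)"
  shows "cube K' b \<subseteq> induced_class n H (a, \<gamma>1) \<or> cube K' b \<subseteq> induced_class n H (a, \<gamma>2)"
proof -
  have "(\<forall>i\<in>crossing. a \<bullet> x0 < a \<bullet> vertex i) \<or> (\<forall>i\<in>crossing. a \<bullet> vertex i < a \<bullet> x0)"
    using cube_in_boundary_iff[OF b x0] bd by blast
  then show ?thesis
  proof
    assume "\<forall>i\<in>crossing. a \<bullet> x0 < a \<bullet> vertex i"
    then have "\<forall>i\<in>crossing. (\<gamma>1 - a \<bullet> vertex i) * (a \<bullet> x0 - a \<bullet> vertex i) > 0"
      using enclose by (auto intro: mult_neg_neg)
    then show ?thesis using cube_subset_induced_class_if_beyond[OF b x0 g(1)] by blast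
  next
    assume "\<forall>i\<in>crossing. a \<bullet> vertex i < a \<bullet> x0"
    then have "\<forall>i\<in>crossing. (\<gamma>2 - a \<bullet> vertex i) * (a \<bullet> x0 - a \<bullet> vertex i) > 0"
      using enclose by (auto intro: mult_pos_pos)
    then show ?thesis using cube_subset_induced_class_if_beyond[OF b x0 g(2)] by blast
  qed
qed

lemma cube_not_subset_both_enclosing_induced_classes:
  assumes enclose: "\<forall>i\<in>crossing. \<gamma>1 < a \<bullet> vertex i \<and> a \<bullet> vertex i < \<gamma>2"
    and g: "generic_hyperplane n H (a, \<gamma>1)" "generic_hyperplane n H (a, \<gamma>2)" and b: "b \<subseteq> {..<n}"
  shows "\<not> (cube K' b \<subseteq> induced_class n H (a, \<gamma>1) \<and> cube K' b \<subseteq> induced_class n H (a, \<gamma>2))"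
proof
  assume "cube K' b \<subseteq> induced_class n H (a, \<gamma>1) \<and> cube K' b \<subseteq> induced_class n H (a, \<gamma>2)"
  then obtain y1 y2 where y1: "y1 \<in> line" "a \<bullet> y1 = \<gamma>1" "realizes H b crossing y1"
    and y2: "y2 \<in> line" "a \<bullet> y2 = \<gamma>2" "realizes H b crossing y2"
    using cube_subset_induced_class_iff[OF g(1) K'(1) _ b] cube_subset_induced_class_iff[OF g(2) K'(1) _ b]
      K'(2) by (auto simp: hp_def)
  obtain i where i: "i \<in> crossing" using crossing_nonempty by blast
  have "(a \<bullet> y1 - a \<bullet> vertex i) * (a \<bullet> y2 - a \<bullet> vertex i) > 0"
    using realizing_points_same_side[OF y1(1) y2(1) y1(3) y2(3) i] .
  moreover have "(a \<bullet> y1 - a \<bullet> vertex i) * (a \<bullet> y2 - a \<bullet> vertex i) < 0"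
    using enclose i y1(2) y2(2) by (auto intro: mult_neg_pos)
  ultimately show False by simp
qed

end

lemma arrangement_line_if_generic:
  fixes H :: "nat \<Rightarrow> 'a::euclidean_space ohp"
  assumes "simple_arrangement n H" "generic_hyperplane n H (a, \<beta>)"
    and "K' \<subseteq> {..<n}" "card K' = DIM('a) - 1"
  obtains p where "arrangement_line H n K' a \<beta> p"
proof -
  have "aff_dim (hp (a, \<beta>) \<inter> flat H K') = 0"
    using generic_hyperplane_general_position[OF assms(2)] assms(3,4)
    unfolding general_position_def by simp
  then obtain p where "flat H K' \<inter> {x. a \<bullet> x = \<beta>} = {p}"
    by (auto simp: aff_dim_eq_0 hp_def Int_commute)
  then have "arrangement_line H n K' a \<beta> p" using assms by unfold_locales
  then show ?thesis by (rule that)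
qed

theorem induced_cubes_subset_boundary:
  fixes H :: "nat \<Rightarrow> 'a::euclidean_space ohp"
  assumes simple: "simple_arrangement n H" and g: "generic_hyperplane n H h"
    and sides: "(\<forall>K. K \<subseteq> {..<n} \<and> card K = DIM('a) \<longrightarrow> flat H K \<subseteq> pos_side h) \<or>
                (\<forall>K. K \<subseteq> {..<n} \<and> card K = DIM('a) \<longrightarrow> flat H K \<subseteq> neg_side h)"
  shows "cubes n (DIM('a) - 1) (induced_class n H h) \<subseteq> boundary n DIM('a) (arr_class n H)"
proof
  fix Q assume "Q \<in> cubes n (DIM('a) - 1) (induced_class n H h)"
  then obtain K' b where K': "K' \<subseteq> {..<n}" "card K' = DIM('a) - 1" and b: "b \<subseteq> {..<n}"
    and Q: "Q = cube K' b" "cube K' b \<subseteq> induced_class n H h"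
    by (auto simp: cubes_def is_cube_iff)
  then obtain x0 where x0: "x0 \<in> hp h" "x0 \<in> flat H K'" "realizes H b ({..<n} - K') x0"
    using cube_subset_induced_class_iff[OF g K'(1) _ b] by auto
  obtain a \<beta> where h: "h = (a, \<beta>)" by (cases h)
  obtain p where "arrangement_line H n K' a \<beta> p"
    using arrangement_line_if_generic[OF simple g[unfolded h] K'] by blast
  then interpret arrangement_line H n K' a \<beta> p .
  have "a \<bullet> x0 = \<beta>" using x0(1) h by (simp add: hp_def)
  moreover have "(\<forall>i\<in>crossing. vertex i \<in> pos_side h) \<or> (\<forall>i\<in>crossing. vertex i \<in> neg_side h)"
    using sides vertex_in_flat by blast
  ultimately have "(\<forall>i\<in>crossing. a \<bullet> x0 < a \<bullet> vertex i) \<or> (\<forall>i\<in>crossing. a \<bullet> vertex i < a \<bullet> x0)"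
    by (auto simp: h pos_side_def neg_side_def)
  then show "Q \<in> boundary n DIM('a) (arr_class n H)"
    using cube_in_boundary_iff[OF b x0(2,3)] Q(1) by blast
qed

section \<open>Two generic hyperplanes enclosing all vertices\<close>

lemma exists_not_orthogonal:
  fixes U :: "'a::euclidean_space set"
  assumes "finite U" "0 \<notin> U"
  obtains a where "\<And>u. u \<in> U \<Longrightarrow> u \<bullet> a \<noteq> 0"
proof -
  have "negligible (\<Union>u\<in>U. {x. u \<bullet> x = 0})"
    using assms by (intro negligible_Union) (auto intro: negligible_hyperplane)
  moreover have "\<not> negligible (UNIV :: 'a set)" by simp
  ultimately obtain a where "a \<notin> (\<Union>u\<in>U. {x. u \<bullet> x = 0})" by (metis UNIV_eq_I)
  with that show ?thesis by blast
qed

lemma exists_direction_nonconstant_on_flats: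
  fixes H :: "nat \<Rightarrow> 'a::euclidean_space ohp"
  assumes simple: "simple_arrangement n H"
  obtains a where "\<And>M. M \<subseteq> {..<n} \<Longrightarrow> card M < DIM('a) \<Longrightarrow> \<exists>y1\<in>flat H M. \<exists>y2\<in>flat H M. a \<bullet> y1 \<noteq> a \<bullet> y2"
proof -
  define \<M> where "\<M> = {M. M \<subseteq> {..<n} \<and> card M < DIM('a)}"
  have "\<forall>M\<in>\<M>. \<exists>y. fst y \<in> flat H M \<and> snd y \<in> flat H M \<and> fst y \<noteq> snd y"
  proof
    fix M assume "M \<in> \<M>"
    have dim: "aff_dim (flat H M) \<ge> 1"
      using simple_arrangement_aff_dim_flat[OF simple, of M] \<open>M \<in> \<M>\<close> by (auto simp: \<M>_def)
    then have "flat H M \<noteq> {}" by (intro notI) simp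
    then obtain y1 where y1: "y1 \<in> flat H M" by blast
    moreover have "flat H M \<noteq> {y1}" using dim by (intro notI) simp
    ultimately obtain y2 where "y2 \<in> flat H M" "y2 \<noteq> y1" by blast
    then show "\<exists>y. fst y \<in> flat H M \<and> snd y \<in> flat H M \<and> fst y \<noteq> snd y"
      using y1 by (intro exI[of _ "(y1, y2)"]) auto
  qed
  then obtain y where y: "\<forall>M\<in>\<M>. fst (y M) \<in> flat H M \<and> snd (y M) \<in> flat H M \<and> fst (y M) \<noteq> snd (y M)"
    by (rule bchoice[THEN exE])
  let ?U = "(\<lambda>M. fst (y M) - snd (y M)) ` \<M>"
  have "finite \<M>" unfolding \<M>_def by (rule finite_subset[of _ "Pow {..<n}"]) auto
  moreover have "0 \<notin> ?U" using y by auto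
  ultimately obtain a where a: "\<And>u. u \<in> ?U \<Longrightarrow> u \<bullet> a \<noteq> 0"
    using exists_not_orthogonal[of ?U] by blast
  show ?thesis
  proof (rule that)
    fix M assume "M \<subseteq> {..<n}" "card M < DIM('a)"
    then have "M \<in> \<M>" by (simp add: \<M>_def)
    then have "(fst (y M) - snd (y M)) \<bullet> a \<noteq> 0" using a by blast
    then have "a \<bullet> fst (y M) \<noteq> a \<bullet> snd (y M)" by (simp add: inner_commute inner_diff_right)
    with y \<open>M \<in> \<M>\<close> show "\<exists>y1\<in>flat H M. \<exists>y2\<in>flat H M. a \<bullet> y1 \<noteq> a \<bullet> y2" by blast
  qed
qed

lemma aff_dim_Int_hyperplane_nonconstant:
  fixes S :: "'a::euclidean_space set"
  assumes "affine S" "y1 \<in> S" "y2 \<in> S" "a \<bullet> y1 \<noteq> a \<bullet> y2"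
  shows "aff_dim (S \<inter> {x. a \<bullet> x = \<beta>}) = aff_dim S - 1"
proof -
  define t where "t = (\<beta> - a \<bullet> y1) / (a \<bullet> y2 - a \<bullet> y1)"
  have "y1 + t *\<^sub>R (y2 - y1) \<in> S" using mem_affine_3_minus[OF assms(1-3,2)] .
  moreover have "a \<bullet> (y1 + t *\<^sub>R (y2 - y1)) = a \<bullet> y1 + t * (a \<bullet> y2 - a \<bullet> y1)"
    by (simp add: inner_add_right inner_diff_right)
  moreover have "a \<bullet> y2 - a \<bullet> y1 \<noteq> 0" using assms(4) by simp
  ultimately have "y1 + t *\<^sub>R (y2 - y1) \<in> S \<inter> {x. a \<bullet> x = \<beta>}" by (simp add: t_def)
  then have "S \<inter> {x. a \<bullet> x = \<beta>} \<noteq> {}" by blast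
  moreover have "\<not> S \<subseteq> {x. a \<bullet> x = \<beta>}" using assms(2-4) by auto
  ultimately show ?thesis using aff_dim_affine_Int_hyperplane[OF assms(1)] by simp
qed

lemma flat_fun_upd: "M \<subseteq> {..<n} \<Longrightarrow> flat (H(n := h)) M = flat H M"
  by (rule flat_cong) auto

lemma flat_fun_upd_insert: "M \<subseteq> {..<n} \<Longrightarrow> flat (H(n := h)) (insert n M) = hp h \<inter> flat H M"
  by (simp add: flat_insert flat_fun_upd)

lemma subset_lessThan_Suc_cases:
  assumes "J \<subseteq> {..<Suc n}"
  obtains "J \<subseteq> {..<n}" | M where "M \<subseteq> {..<n}" "J = insert n M" "card J = Suc (card M)"
proof (cases "n \<in> J")
  case True
  have "J - {n} \<subseteq> {..<n}" using assms by (auto simp: less_Suc_eq)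
  moreover have "J = insert n (J - {n})" using True by blast
  moreover have "card J = Suc (card (J - {n}))"
    using card_Suc_Diff1[OF finite_subset[OF assms finite_lessThan] True] by simp
  ultimately show ?thesis by (rule that(2))
next
  case False
  then have "J \<subseteq> {..<n}" using assms by (auto simp: less_Suc_eq)
  then show ?thesis by (rule that(1))
qed

lemma generic_hyperplaneI:
  fixes H :: "nat \<Rightarrow> 'a::euclidean_space ohp"
  assumes simple: "simple_arrangement n H"
    and nonconst: "\<And>M. M \<subseteq> {..<n} \<Longrightarrow> card M < DIM('a) \<Longrightarrow> \<exists>y1\<in>flat H M. \<exists>y2\<in>flat H M. a \<bullet> y1 \<noteq> a \<bullet> y2"
    and off: "\<And>K v. K \<subseteq> {..<n} \<Longrightarrow> card K = DIM('a) \<Longrightarrow> v \<in> flat H K \<Longrightarrow> a \<bullet> v \<noteq> \<beta>"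
  shows "generic_hyperplane n H (a, \<beta>)"
  unfolding generic_hyperplane_iff general_position_def
proof (intro conjI allI impI)
  show "fst (a, \<beta>) \<noteq> 0" using nonconst[of "{}"] by auto
next
  fix J assume J: "J \<subseteq> {..<Suc n} \<and> card J \<le> DIM('a)"
  then have "J \<subseteq> {..<Suc n}" by blast
  then show "aff_dim (UNIV \<inter> flat (H(n := (a, \<beta>))) J) = int DIM('a) - int (card J)"
  proof (cases rule: subset_lessThan_Suc_cases)
    case 1
    then show ?thesis using simple_arrangement_aff_dim_flat[OF simple 1] J by (simp add: flat_fun_upd)
  next
    case (2 M)
    then have "card M < DIM('a)" using J by simp
    then obtain y1 y2 where "y1 \<in> flat H M" "y2 \<in> flat H M" "a \<bullet> y1 \<noteq> a \<bullet> y2"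
      using nonconst[OF 2(1)] by blast
    then have "aff_dim (flat H M \<inter> {x. a \<bullet> x = \<beta>}) = aff_dim (flat H M) - 1"
      by (rule aff_dim_Int_hyperplane_nonconstant[OF affine_flat])
    then show ?thesis
      using simple_arrangement_aff_dim_flat[OF simple 2(1)] \<open>card M < DIM('a)\<close> 2
      by (simp add: flat_fun_upd_insert hp_def Int_commute)
  qed
next
  fix J assume J: "J \<subseteq> {..<Suc n} \<and> card J = Suc DIM('a)"
  then have "J \<subseteq> {..<Suc n}" by blast
  then show "UNIV \<inter> flat (H(n := (a, \<beta>))) J = {}"
  proof (cases rule: subset_lessThan_Suc_cases)
    case 1
    then show ?thesis using simple_arrangement_flat_empty[OF simple 1] J by (simp add: flat_fun_upd)
  next
    case (2 M)
    then have "card M = DIM('a)" using J by simp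
    then show ?thesis using off[OF 2(1)] 2(2) by (auto simp: flat_fun_upd_insert[OF 2(1)] hp_def)
  qed
qed

lemma exists_generic_hyperplanes_enclosing_vertices:
  fixes H :: "nat \<Rightarrow> 'a::euclidean_space ohp"
  assumes simple: "simple_arrangement n H"
  obtains a \<beta>1 \<beta>2 where "generic_hyperplane n H (a, \<beta>1)" "generic_hyperplane n H (a, \<beta>2)"
    "\<And>K v. K \<subseteq> {..<n} \<Longrightarrow> card K = DIM('a) \<Longrightarrow> v \<in> flat H K \<Longrightarrow> \<beta>1 < a \<bullet> v \<and> a \<bullet> v < \<beta>2"
proof -
  obtain a where nonconst: "\<And>M. M \<subseteq> {..<n} \<Longrightarrow> card M < DIM('a) \<Longrightarrow> \<exists>y1\<in>flat H M. \<exists>y2\<in>flat H M. a \<bullet> y1 \<noteq> a \<bullet> y2"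
    using exists_direction_nonconstant_on_flats[OF simple] by blast
  define \<K> where "\<K> = {K. K \<subseteq> {..<n} \<and> card K = DIM('a)}"
  have "finite \<K>" unfolding \<K>_def by (rule finite_subset[of _ "Pow {..<n}"]) auto
  moreover have "finite (flat H K)" if "K \<in> \<K>" for K
    using simple_arrangement_flat_singleton[OF simple, of K] that by (auto simp: \<K>_def)
  ultimately have "finite (\<Union>K\<in>\<K>. flat H K)" by (rule finite_UN_I)
  then have "bounded ((\<lambda>v. a \<bullet> v) ` (\<Union>K\<in>\<K>. flat H K))" by (simp add: finite_imp_bounded)
  then obtain B where B: "\<And>v. v \<in> (\<Union>K\<in>\<K>. flat H K) \<Longrightarrow> \<bar>a \<bullet> v\<bar> \<le> B" by (auto simp: bounded_iff)
  have enclosed: "- B - 1 < a \<bullet> v \<and> a \<bullet> v < B + 1"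
    if "K \<subseteq> {..<n}" "card K = DIM('a)" "v \<in> flat H K" for K v
    using B[of v] that by (force simp: \<K>_def)
  have "generic_hyperplane n H (a, \<beta>)" if \<beta>: "\<beta> = - B - 1 \<or> \<beta> = B + 1" for \<beta>
  proof (rule generic_hyperplaneI[OF simple nonconst])
    fix K v assume "K \<subseteq> {..<n}" "card K = DIM('a)" "v \<in> flat H K"
    from enclosed[OF this] \<beta> show "a \<bullet> v \<noteq> \<beta>" by auto
  qed
  then show ?thesis using enclosed by (intro that[of a "- B - 1" "B + 1"]) auto
qed

lemma boundary_subset_enclosing_induced_cubes:
  fixes H :: "nat \<Rightarrow> 'a::euclidean_space ohp"
  assumes simple: "simple_arrangement n H"
    and g: "generic_hyperplane n H (a, \<beta>1)" "generic_hyperplane n H (a, \<beta>2)"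
    and enclosed: "\<And>K v. K \<subseteq> {..<n} \<Longrightarrow> card K = DIM('a) \<Longrightarrow> v \<in> flat H K \<Longrightarrow> \<beta>1 < a \<bullet> v \<and> a \<bullet> v < \<beta>2"
  shows "boundary n DIM('a) (arr_class n H) \<subseteq>
    cubes n (DIM('a) - 1) (induced_class n H (a, \<beta>1)) \<union> cubes n (DIM('a) - 1) (induced_class n H (a, \<beta>2))"
proof
  fix Q assume Q: "Q \<in> boundary n DIM('a) (arr_class n H)"
  then obtain K' b where K': "K' \<subseteq> {..<n}" "card K' = DIM('a) - 1" and b: "b \<subseteq> {..<n}"
    and "Q = cube K' b" "cube K' b \<subseteq> arr_class n H"
    by (auto simp: boundary_def cubes_def is_cube_iff)
  obtain p where "arrangement_line H n K' a \<beta>1 p"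
    using arrangement_line_if_generic[OF simple g(1) K'] by blast
  then interpret arrangement_line H n K' a \<beta>1 p .
  have "\<forall>i\<in>crossing. \<beta>1 < a \<bullet> vertex i \<and> a \<bullet> vertex i < \<beta>2"
    using enclosed vertex_in_flat by blast
  moreover obtain x0 where "x0 \<in> line" "realizes H b crossing x0"
    using \<open>cube K' b \<subseteq> arr_class n H\<close> cube_subset_arr_class_iff[OF simple K'(1) _ b] K'(2) by auto
  ultimately show "Q \<in> cubes n (DIM('a) - 1) (induced_class n H (a, \<beta>1)) \<union>
      cubes n (DIM('a) - 1) (induced_class n H (a, \<beta>2))"
    using boundary_cube_subset_enclosing_induced_class[OF _ g b] Q \<open>Q = cube K' b\<close>
    by (auto simp: cubes_def boundary_def)
qed

lemma enclosing_induced_cubes_disjoint: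
  fixes H :: "nat \<Rightarrow> 'a::euclidean_space ohp"
  assumes simple: "simple_arrangement n H"
    and g: "generic_hyperplane n H (a, \<beta>1)" "generic_hyperplane n H (a, \<beta>2)"
    and enclosed: "\<And>K v. K \<subseteq> {..<n} \<Longrightarrow> card K = DIM('a) \<Longrightarrow> v \<in> flat H K \<Longrightarrow> \<beta>1 < a \<bullet> v \<and> a \<bullet> v < \<beta>2"
  shows "cubes n (DIM('a) - 1) (induced_class n H (a, \<beta>1)) \<inter> cubes n (DIM('a) - 1) (induced_class n H (a, \<beta>2)) = {}"
proof (rule equals0I)
  fix Q
  assume "Q \<in> cubes n (DIM('a) - 1) (induced_class n H (a, \<beta>1)) \<inter> cubes n (DIM('a) - 1) (induced_class n H (a, \<beta>2))"
  then obtain K' b where K': "K' \<subseteq> {..<n}" "card K' = DIM('a) - 1" and b: "b \<subseteq> {..<n}"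
    and sub: "cube K' b \<subseteq> induced_class n H (a, \<beta>1)" "cube K' b \<subseteq> induced_class n H (a, \<beta>2)"
    by (auto simp: cubes_def is_cube_iff)
  obtain p where "arrangement_line H n K' a \<beta>1 p"
    using arrangement_line_if_generic[OF simple g(1) K'] by blast
  then interpret arrangement_line H n K' a \<beta>1 p .
  have "\<forall>i\<in>crossing. \<beta>1 < a \<bullet> vertex i \<and> a \<bullet> vertex i < \<beta>2"
    using enclosed vertex_in_flat by blast
  with sub show False using cube_not_subset_both_enclosing_induced_classes[OF _ g b] by blast
qed

theorem boundary_eq_cubes_of_two_induced_classes:
  fixes H :: "nat \<Rightarrow> 'a::euclidean_space ohp"
  assumes simple: "simple_arrangement n H"
  shows "\<exists>C1 C2. C1 \<subseteq> arr_class n H \<and> C2 \<subseteq> arr_class n H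
    \<and> maximum_class n (DIM('a) - 1) C1 \<and> maximum_class n (DIM('a) - 1) C2
    \<and> boundary n DIM('a) (arr_class n H) = cubes n (DIM('a) - 1) C1 \<union> cubes n (DIM('a) - 1) C2
    \<and> cubes n (DIM('a) - 1) C1 \<inter> cubes n (DIM('a) - 1) C2 = {}"
proof -
  obtain a \<beta>1 \<beta>2 where g: "generic_hyperplane n H (a, \<beta>1)" "generic_hyperplane n H (a, \<beta>2)"
    and enclosed: "\<And>K v. K \<subseteq> {..<n} \<Longrightarrow> card K = DIM('a) \<Longrightarrow> v \<in> flat H K \<Longrightarrow> \<beta>1 < a \<bullet> v \<and> a \<bullet> v < \<beta>2"
    using exists_generic_hyperplanes_enclosing_vertices[OF simple] by blast
  have "cubes n (DIM('a) - 1) (induced_class n H (a, \<beta>1)) \<subseteq> boundary n DIM('a) (arr_class n H)"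
    using enclosed by (intro induced_cubes_subset_boundary[OF simple g(1)]) (auto simp: pos_side_def)
  moreover have "cubes n (DIM('a) - 1) (induced_class n H (a, \<beta>2)) \<subseteq> boundary n DIM('a) (arr_class n H)"
    using enclosed by (intro induced_cubes_subset_boundary[OF simple g(2)]) (auto simp: neg_side_def)
  ultimately have "boundary n DIM('a) (arr_class n H) =
      cubes n (DIM('a) - 1) (induced_class n H (a, \<beta>1)) \<union> cubes n (DIM('a) - 1) (induced_class n H (a, \<beta>2))"
    using boundary_subset_enclosing_induced_cubes[OF simple g enclosed] by (intro equalityI Un_least)
  then show ?thesis
    by (intro exI[of _ "induced_class n H (a, \<beta>1)"] exI[of _ "induced_class n H (a, \<beta>2)"] conjI
        induced_class_subset_arr_class induced_class_maximum[OF simple] g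
        enclosing_induced_cubes_disjoint[OF simple g enclosed])
qed

theorem corollary1:
  fixes H :: "nat \<Rightarrow> 'a::euclidean_space \<times> real" and h :: "'a \<times> real" and n :: nat
  assumes "simple_arrangement n H"
    and "generic_hyperplane n H h"
  shows "maximum_class n (DIM('a) - 1) (induced_class n H h)
         \<and> induced_class n H h \<subseteq> arr_class n H
         \<and> ((\<forall>K. K \<subseteq> {..<n} \<and> card K = DIM('a) \<longrightarrow> (\<Inter>i\<in>K. hp (H i)) \<subseteq> pos_side h) \<or>
            (\<forall>K. K \<subseteq> {..<n} \<and> card K = DIM('a) \<longrightarrow> (\<Inter>i\<in>K. hp (H i)) \<subseteq> neg_side h)
            \<longrightarrow> cubes n (DIM('a) - 1) (induced_class n H h) \<subseteq> boundary n DIM('a) (arr_class n H)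
              \<and> (\<exists>C1 C2. C1 \<subseteq> arr_class n H \<and> C2 \<subseteq> arr_class n H
                   \<and> maximum_class n (DIM('a) - 1) C1 \<and> maximum_class n (DIM('a) - 1) C2
                   \<and> boundary n DIM('a) (arr_class n H) =
                       cubes n (DIM('a) - 1) C1 \<union> cubes n (DIM('a) - 1) C2
                   \<and> cubes n (DIM('a) - 1) C1 \<inter> cubes n (DIM('a) - 1) C2 = {}))"
  using induced_class_maximum[OF assms] induced_class_subset_arr_class
    induced_cubes_subset_boundary[OF assms, unfolded flat_def]
    boundary_eq_cubes_of_two_induced_classes[OF assms(1)]
  by blast

end
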